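(* For the model $(\mathcal N,f,r)$ with $f$ the algebraic sum over $\mathbb F_q$, $$\widehat{\mathcal C}(\mathcal N,f,r)\le\min_{W\in\mathcal W'_r}|C^*_W|,$$ and this right-hand side equals $\min\{|C|-|W|:(W,C)\in\mathcal W_r\times\Lambda(\mathcal N),\ W\subseteq C,\ D_W\subseteq I_C\}$, where $\mathcal W'_r=\{W\in\mathcal W_r:W=\widehat W\}$ and $C^*_W$ is the primary minimum cut separating $\rho$ from $D_W$ in the residual graph $\mathcal G_W$.
   Context: Network model: $\mathcal G=(\mathcal V,\mathcal E)$ is a finite directed acyclic graph (multiple edges allowed); $\mathcal E_{\rm in}(u)$ are the input edges of node $u$. $S=\{\sigma_1,\dots,\sigma_s\}$ is the set of source nodes (exactly the nodes without input edges), $\rho\notin S$ the sink (no output edges), every node other than $\rho$ has a directed path to $\rho$; $\mathcal N=(\mathcal G,S,\rho)$. For a node $\sigma$ and edge $e$, $\sigma\to e$ means there is a directed path from $\sigma$ whose last edge is $e$. For $C\subseteq\mathcal E$: $D_C=\{\sigma\in S:\exists e\in C,\ \sigma\to e\}$, $I_C=\{\sigma\in S:$ no path from $\sigma$ to $\rho$ after deleting $C\}$; $\Lambda(\mathcal N)=\{C\subseteq\mathcal E:I_C\neq\emptyset\}$. $\mathcal W_r=\{W\subseteq\mathcal E:|W|\le r\}$. $\mathcal G_W$ is $\mathcal G$ with the edges of $W$ deleted. Cuts: an edge set $C$ separates a node set (resp. edge set) $X$ from a node set $U$ if every path from a node of $U$ to a node (resp. edge) of $X$ uses an edge of $C$ (formally,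 for an edge set $X$ one subdivides each $e\in X$ by a new node $v_e$ into $e^1,e^2$ and identifies $e^1,e^2$ with $e$ in the cut). A minimum cut has minimum size; a minimum cut separating $X$ from $U$ is primary if it separates from $U$ every minimum cut separating $X$ from $U$ (it exists and is unique); for a node $\rho$ this means separating $\mathcal E_{\rm in}(\rho)$. $\widehat W$ is the primary minimum cut separating $W$ from $D_W$. Secure model: $q$ a prime power, $f(m_1,\dots,m_s)=\sum_i m_i$ over $\mathbb F_q$; each edge carries one symbol of $\mathbb F_q$ per use. An $(\ell,n)$ secure network code: source $\sigma_i$ holds $\mathbf M_i\in\mathbb F_q^\ell$ with i.i.d. uniform entries and a key $\mathbf K_i$ uniform on a finite set $\mathcal K_i$; all mutually independent. Each edge out of $\sigma_i$ carries a function of $(\mathbf M_i,\mathbf K_i)$ with values in $\mathbb F_q^n$; every other edge carries a function in $\mathbb F_q^n$ of the messages on the input edges of its tail; a decoder maps messages on $\mathcal E_{\rm in}(\rho)$ to $\mathbb F_q^\ell$. Admissible: decoder outputs $\sum_i\mathbf m_i$ for all messages and keys, and $I(\mathbf Y_W;\mathbf M_S)=0$ for all $W\in\mathcal W_r$ ($\mathbf Y_W$ the messages on $W$, $\mathbf M_S=(\mathbf M_1,\dots,\mathbf M_s)$). Rate $\ell/n$; $R$ achievable if for every $\epsilon>0$ some admissible code has rate $>R-\epsilon$; $\widehat{\mathcal C}(\mathcal N,f,r)$ is the maximum achievable rate. *)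

theory Defs
  imports "HOL-Probability.Probability"
begin

fun is_walk :: "'e set \<Rightarrow> ('e \<Rightarrow> 'v) \<Rightarrow> ('e \<Rightarrow> 'v) \<Rightarrow> 'v \<Rightarrow> 'e list \<Rightarrow> 'v \<Rightarrow> bool" where
  "is_walk Eg tlE hdE u [] v = (u = v)"
| "is_walk Eg tlE hdE u (e # es) v = (e \<in> Eg \<and> tlE e = u \<and> is_walk Eg tlE hdE (hdE e) es v)"

definition in_edges :: "'e set \<Rightarrow> ('e \<Rightarrow> 'v) \<Rightarrow> 'v \<Rightarrow> 'e set" where
  "in_edges Eg hdE u = {e \<in> Eg. hdE e = u}"

definition network :: "'v set \<Rightarrow> 'e set \<Rightarrow> ('e \<Rightarrow> 'v) \<Rightarrow> ('e \<Rightarrow> 'v) \<Rightarrow> 'v set \<Rightarrow> 'v \<Rightarrow> bool" where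
  "network V E tlE hdE S \<rho> \<longleftrightarrow>
     finite V \<and> finite E \<and> (\<forall>e\<in>E. tlE e \<in> V \<and> hdE e \<in> V) \<and>
     (\<forall>v es. is_walk E tlE hdE v es v \<longrightarrow> es = []) \<and>
     S = {v \<in> V. in_edges E hdE v = {}} \<and>
     \<rho> \<in> V \<and> \<rho> \<notin> S \<and> (\<forall>e\<in>E. tlE e \<noteq> \<rho>) \<and>
     (\<forall>v\<in>V - {\<rho>}. \<exists>es. is_walk E tlE hdE v es \<rho>)"

definition reaches_edge :: "'e set \<Rightarrow> ('e \<Rightarrow> 'v) \<Rightarrow> ('e \<Rightarrow> 'v) \<Rightarrow> 'v \<Rightarrow> 'e \<Rightarrow> bool" where
  "reaches_edge E tlE hdE \<sigma> e \<longleftrightarrow> (\<exists>es. es \<noteq> [] \<and> last es = e \<and> is_walk E tlE hdE \<sigma> es (hdE e))"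

definition D_set :: "'e set \<Rightarrow> ('e \<Rightarrow> 'v) \<Rightarrow> ('e \<Rightarrow> 'v) \<Rightarrow> 'v set \<Rightarrow> 'e set \<Rightarrow> 'v set" where
  "D_set E tlE hdE S C = {\<sigma> \<in> S. \<exists>e\<in>C. reaches_edge E tlE hdE \<sigma> e}"

definition I_set :: "'e set \<Rightarrow> ('e \<Rightarrow> 'v) \<Rightarrow> ('e \<Rightarrow> 'v) \<Rightarrow> 'v set \<Rightarrow> 'v \<Rightarrow> 'e set \<Rightarrow> 'v set" where
  "I_set E tlE hdE S \<rho> C = {\<sigma> \<in> S. \<not> (\<exists>es. is_walk (E - C) tlE hdE \<sigma> es \<rho>)}"

definition Lambda_set :: "'e set \<Rightarrow> ('e \<Rightarrow> 'v) \<Rightarrow> ('e \<Rightarrow> 'v) \<Rightarrow> 'v set \<Rightarrow> 'v \<Rightarrow> 'e set set" where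
  "Lambda_set E tlE hdE S \<rho> = {C. C \<subseteq> E \<and> I_set E tlE hdE S \<rho> C \<noteq> {}}"

definition W_r :: "'e set \<Rightarrow> nat \<Rightarrow> 'e set set" where
  "W_r E r = {W. W \<subseteq> E \<and> card W \<le> r}"

definition sep_nodes :: "'e set \<Rightarrow> ('e \<Rightarrow> 'v) \<Rightarrow> ('e \<Rightarrow> 'v) \<Rightarrow> 'e set \<Rightarrow> 'v set \<Rightarrow> 'v set \<Rightarrow> bool" where
  "sep_nodes Eg tlE hdE C X U \<longleftrightarrow>
     (\<forall>u\<in>U. \<forall>x\<in>X. \<forall>es. is_walk Eg tlE hdE u es x \<longrightarrow> set es \<inter> C \<noteq> {})"

text \<open>C separates the edge set X from the node set U (via the subdivision of the
  edges of X: a path to the subdividing node of e is a path whose last edge is e).\<close>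
definition sep_edges :: "'e set \<Rightarrow> ('e \<Rightarrow> 'v) \<Rightarrow> ('e \<Rightarrow> 'v) \<Rightarrow> 'e set \<Rightarrow> 'e set \<Rightarrow> 'v set \<Rightarrow> bool" where
  "sep_edges Eg tlE hdE C X U \<longleftrightarrow>
     (\<forall>u\<in>U. \<forall>es. es \<noteq> [] \<longrightarrow> last es \<in> X \<longrightarrow> is_walk Eg tlE hdE u es (hdE (last es))
        \<longrightarrow> set es \<inter> C \<noteq> {})"

definition min_cut_edges :: "'e set \<Rightarrow> ('e \<Rightarrow> 'v) \<Rightarrow> ('e \<Rightarrow> 'v) \<Rightarrow> 'e set \<Rightarrow> 'e set \<Rightarrow> 'v set \<Rightarrow> bool" where
  "min_cut_edges Eg tlE hdE C X U \<longleftrightarrow> C \<subseteq> Eg \<and> sep_edges Eg tlE hdE C X U \<and>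
     (\<forall>C'. C' \<subseteq> Eg \<longrightarrow> sep_edges Eg tlE hdE C' X U \<longrightarrow> card C \<le> card C')"

definition primary_cut_edges :: "'e set \<Rightarrow> ('e \<Rightarrow> 'v) \<Rightarrow> ('e \<Rightarrow> 'v) \<Rightarrow> 'e set \<Rightarrow> 'e set \<Rightarrow> 'v set \<Rightarrow> bool" where
  "primary_cut_edges Eg tlE hdE C X U \<longleftrightarrow> min_cut_edges Eg tlE hdE C X U \<and>
     (\<forall>C'. min_cut_edges Eg tlE hdE C' X U \<longrightarrow> sep_edges Eg tlE hdE C C' U)"

definition min_cut_nodes :: "'e set \<Rightarrow> ('e \<Rightarrow> 'v) \<Rightarrow> ('e \<Rightarrow> 'v) \<Rightarrow> 'e set \<Rightarrow> 'v set \<Rightarrow> 'v set \<Rightarrow> bool" where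
  "min_cut_nodes Eg tlE hdE C X U \<longleftrightarrow> C \<subseteq> Eg \<and> sep_nodes Eg tlE hdE C X U \<and>
     (\<forall>C'. C' \<subseteq> Eg \<longrightarrow> sep_nodes Eg tlE hdE C' X U \<longrightarrow> card C \<le> card C')"

definition primary_cut_nodes :: "'e set \<Rightarrow> ('e \<Rightarrow> 'v) \<Rightarrow> ('e \<Rightarrow> 'v) \<Rightarrow> 'e set \<Rightarrow> 'v set \<Rightarrow> 'v set \<Rightarrow> bool" where
  "primary_cut_nodes Eg tlE hdE C X U \<longleftrightarrow> min_cut_nodes Eg tlE hdE C X U \<and>
     (\<forall>C'. min_cut_nodes Eg tlE hdE C' X U \<longrightarrow> sep_edges Eg tlE hdE C C' U)"

definition W_hat :: "'e set \<Rightarrow> ('e \<Rightarrow> 'v) \<Rightarrow> ('e \<Rightarrow> 'v) \<Rightarrow> 'v set \<Rightarrow> 'e set \<Rightarrow> 'e set" where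
  "W_hat E tlE hdE S W = (THE C. primary_cut_edges E tlE hdE C W (D_set E tlE hdE S W))"

definition C_star :: "'e set \<Rightarrow> ('e \<Rightarrow> 'v) \<Rightarrow> ('e \<Rightarrow> 'v) \<Rightarrow> 'v set \<Rightarrow> 'v \<Rightarrow> 'e set \<Rightarrow> 'e set" where
  "C_star E tlE hdE S \<rho> W = (THE C. primary_cut_nodes (E - W) tlE hdE C {\<rho>} (D_set E tlE hdE S W))"

text \<open>W'_r (nonempty W only).\<close>
definition W'_r :: "'e set \<Rightarrow> ('e \<Rightarrow> 'v) \<Rightarrow> ('e \<Rightarrow> 'v) \<Rightarrow> 'v set \<Rightarrow> nat \<Rightarrow> 'e set set" where
  "W'_r E tlE hdE S r = {W \<in> W_r E r. W \<noteq> {} \<and> W = W_hat E tlE hdE S W}"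

definition vec_sum :: "nat \<Rightarrow> 'v set \<Rightarrow> ('v \<Rightarrow> 'f::field list) \<Rightarrow> 'f list" where
  "vec_sum l S m = map (\<lambda>j. \<Sum>\<sigma>\<in>S. m \<sigma> ! j) [0..<l]"

text \<open>The uniform
  distribution on this finite set makes all message entries i.i.d. uniform, each key
  uniform on its key set, and all of them mutually independent.\<close>
definition sample_space :: "'v set \<Rightarrow> ('v \<Rightarrow> nat set) \<Rightarrow> nat \<Rightarrow> (('v \<Rightarrow> 'f list) \<times> ('v \<Rightarrow> nat)) set" where
  "sample_space S K l = {(m, k). (\<forall>\<sigma>\<in>S. length (m \<sigma>) = l \<and> k \<sigma> \<in> K \<sigma>) \<and>
                                (\<forall>v. v \<notin> S \<longrightarrow> m v = [] \<and> k v = 0)}"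

text \<open>K: key sets; enc e: local encoding
  function of an edge e out of a source (function of that source's message and key);
  phi e: local encoding function of any other edge (function of the messages on the
  input edges of its tail); psi: decoding function (function of the messages on the
  input edges of rho); y e: the resulting global message on edge e as a function of all
  messages and keys.\<close>
definition admissible_code ::
  "'e set \<Rightarrow> ('e \<Rightarrow> 'v) \<Rightarrow> ('e \<Rightarrow> 'v) \<Rightarrow> 'v set \<Rightarrow> 'v \<Rightarrow> nat \<Rightarrow> 'f::{finite,field} itself \<Rightarrow> nat \<Rightarrow> nat \<Rightarrow> bool" where
  "admissible_code E tlE hdE S \<rho> r F l n \<longleftrightarrow>
     0 < l \<and> 0 < n \<and>
     (\<exists>(K :: 'v \<Rightarrow> nat set) (enc :: 'e \<Rightarrow> 'f list \<Rightarrow> nat \<Rightarrow> 'f list)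
        (phi :: 'e \<Rightarrow> ('e \<Rightarrow> 'f list) \<Rightarrow> 'f list) (psi :: ('e \<Rightarrow> 'f list) \<Rightarrow> 'f list)
        (y :: 'e \<Rightarrow> ('v \<Rightarrow> 'f list) \<times> ('v \<Rightarrow> nat) \<Rightarrow> 'f list).
        let \<Omega> = sample_space S K l in
        (\<forall>\<sigma>\<in>S. finite (K \<sigma>) \<and> K \<sigma> \<noteq> {}) \<and>
        (\<forall>\<omega>\<in>\<Omega>. \<forall>e\<in>E. tlE e \<in> S \<longrightarrow> y e \<omega> = enc e (fst \<omega> (tlE e)) (snd \<omega> (tlE e))) \<and>
        (\<forall>\<omega>\<in>\<Omega>. \<forall>e\<in>E. tlE e \<notin> S \<longrightarrow>
            y e \<omega> = phi e (\<lambda>d. if d \<in> in_edges E hdE (tlE e) then y d \<omega> else [])) \<and>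
        (\<forall>\<omega>\<in>\<Omega>. \<forall>e\<in>E. length (y e \<omega>) = n) \<and>
        (\<forall>\<omega>\<in>\<Omega>. psi (\<lambda>d. if d \<in> in_edges E hdE \<rho> then y d \<omega> else []) = vec_sum l S (fst \<omega>)) \<and>
        (\<forall>W\<in>W_r E r.
           prob_space.mutual_information (measure_pmf (pmf_of_set \<Omega>)) 2 (count_space UNIV) (count_space UNIV)
             (\<lambda>\<omega>. \<lambda>e. if e \<in> W then y e \<omega> else []) (\<lambda>\<omega>. fst \<omega>) = 0))"

definition achievable_rate ::
  "'e set \<Rightarrow> ('e \<Rightarrow> 'v) \<Rightarrow> ('e \<Rightarrow> 'v) \<Rightarrow> 'v set \<Rightarrow> 'v \<Rightarrow> nat \<Rightarrow> 'f::{finite,field} itself \<Rightarrow> real \<Rightarrow> bool" where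
  "achievable_rate E tlE hdE S \<rho> r F R \<longleftrightarrow>
     (\<forall>\<epsilon>>0. \<exists>l n. admissible_code E tlE hdE S \<rho> r F l n \<and> real l / real n > R - \<epsilon>)"

end

theory Submission
  imports Defs
begin

text \<open>For \<open>W \<in> \<W>'\<^sub>r\<close> and an admissible code, zero mutual information between the
  messages on \<open>W\<close> and the source messages lets every message vector occur together with the
  wiretapped messages of one fixed outcome; the keys of the sources outside \<open>D\<^sub>W\<close>, which have no
  path to \<open>W\<close>, can be kept fixed too.  Varying only the message \<open>t\<close> of a source in \<open>D\<^sub>W\<close>, the
  messages into \<open>\<rho>\<close>, hence the decoded sum and hence \<open>t\<close>, are determined by the messages on
  \<open>C\<^sup>*\<^sub>W\<close>, so \<open>q\<^sup>l \<le> q\<^bsup>n |C\<^sup>*\<^sub>W|\<^esup>\<close>.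

  For the identity, \<open>W \<mapsto> (W, W \<union> C\<^sup>*\<^sub>W)\<close> maps \<open>\<W>'\<^sub>r\<close> to admissible pairs, and conversely a pair
  \<open>(W, C)\<close> is dominated by \<open>Wh W \<in> \<W>'\<^sub>r\<close>, because \<open>C - W\<close> still separates \<open>\<rho>\<close> from \<open>D\<^sub>W = D\<^bsub>Wh W\<^esub>\<close>.
  Primary cuts exist and are unique by the usual submodularity argument on the lattice of cuts.\<close>

lemma is_walk_append:
  "is_walk Eg t h u (xs @ ys) v \<longleftrightarrow> (\<exists>w. is_walk Eg t h u xs w \<and> is_walk Eg t h w ys v)"
  by (induction xs arbitrary: u) auto

lemma is_walk_edges_subset: "is_walk Eg t h u es v \<Longrightarrow> set es \<subseteq> Eg"
  by (induction es arbitrary: u) auto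

lemma is_walk_mono: "is_walk Eg t h u es v \<Longrightarrow> set es \<subseteq> Eg' \<Longrightarrow> is_walk Eg' t h u es v"
  by (induction es arbitrary: u) auto

lemma is_walk_Diff:
  assumes "is_walk Eg t h u es v" "set es \<inter> C = {}"
  shows "is_walk (Eg - C) t h u es v"
  using is_walk_mono[OF assms(1)] is_walk_edges_subset[OF assms(1)] assms(2) by blast

section \<open>Edge cuts\<close>

locale edge_cuts =
  fixes Eg :: "'e set" and t h :: "'e \<Rightarrow> 'v"
  assumes finite_edges: "finite Eg"
begin

abbreviation "sep C X U \<equiv> sep_edges Eg t h C X U"
abbreviation "min_cut C X U \<equiv> min_cut_edges Eg t h C X U"
abbreviation "primary_cut C X U \<equiv> primary_cut_edges Eg t h C X U"

lemma sepD:
  "sep C X U \<Longrightarrow> u \<in> U \<Longrightarrow> is_walk Eg t h u (as @ [e]) (h e) \<Longrightarrow> e \<in> X \<Longrightarrow> set (as @ [e]) \<inter> C \<noteq> {}"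
  unfolding sep_edges_def by (metis last_snoc snoc_eq_iff_butlast)

lemma sepI:
  "(\<And>u as e. u \<in> U \<Longrightarrow> is_walk Eg t h u (as @ [e]) (h e) \<Longrightarrow> e \<in> X \<Longrightarrow> set (as @ [e]) \<inter> C \<noteq> {})
   \<Longrightarrow> sep C X U"
  unfolding sep_edges_def by (metis append_butlast_last_id)

lemma min_cutD:
  "min_cut P X U \<Longrightarrow> P \<subseteq> Eg" "min_cut P X U \<Longrightarrow> sep P X U"
  "min_cut P X U \<Longrightarrow> C \<subseteq> Eg \<Longrightarrow> sep C X U \<Longrightarrow> card P \<le> card C"
  unfolding min_cut_edges_def by blast+

lemma min_cutI:
  "P \<subseteq> Eg \<Longrightarrow> sep P X U \<Longrightarrow> (\<And>C. C \<subseteq> Eg \<Longrightarrow> sep C X U \<Longrightarrow> card P \<le> card C) \<Longrightarrow> min_cut P X U"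
  unfolding min_cut_edges_def by blast

lemma primary_cutD:
  "primary_cut C X U \<Longrightarrow> min_cut C X U" "primary_cut C X U \<Longrightarrow> min_cut C' X U \<Longrightarrow> sep C C' U"
  unfolding primary_cut_edges_def by blast+

lemma walk_split_first:
  assumes "is_walk Eg t h u es v" "set es \<inter> Z \<noteq> {}"
  obtains as c bs where "es = as @ c # bs" "c \<in> Z" "set as \<inter> Z = {}"
    "is_walk Eg t h u (as @ [c]) (h c)" "is_walk Eg t h (h c) bs v"
proof -
  from assms(2) obtain as c bs where es: "es = as @ c # bs" "c \<in> Z" "set as \<inter> Z = {}"
    using split_list_first_prop[of es "\<lambda>x. x \<in> Z"] by blast
  from assms(1) have "is_walk Eg t h u (as @ [c]) (h c)" "is_walk Eg t h (h c) bs v"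
    unfolding es(1) by (auto simp: is_walk_append)
  with es show ?thesis by (rule that)
qed

lemma walk_split_last:
  assumes "is_walk Eg t h u es v" "set es \<inter> Z \<noteq> {}"
  obtains as c bs where "es = as @ c # bs" "c \<in> Z" "set bs \<inter> Z = {}"
    "is_walk Eg t h u (as @ [c]) (h c)" "is_walk Eg t h (h c) bs v"
proof -
  from assms(2) obtain as c bs where es: "es = as @ c # bs" "c \<in> Z" "set bs \<inter> Z = {}"
    using split_list_last_prop[of es "\<lambda>x. x \<in> Z"] by blast
  from assms(1) have "is_walk Eg t h u (as @ [c]) (h c)" "is_walk Eg t h (h c) bs v"
    unfolding es(1) by (auto simp: is_walk_append)
  with es show ?thesis by (rule that)
qed

lemma sep_all_edges: "sep Eg X U"
  by (rule sepI) (auto dest: is_walk_edges_subset)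

lemma sep_refl: "sep X X U"
  by (rule sepI) auto

lemma sep_trans:
  assumes CP: "sep C P U" and PX: "sep P X U"
  shows "sep C X U"
proof (rule sepI)
  fix u as e assume u: "u \<in> U" and w: "is_walk Eg t h u (as @ [e]) (h e)" and e: "e \<in> X"
  obtain as' c bs where es: "as @ [e] = as' @ c # bs" "c \<in> P" "is_walk Eg t h u (as' @ [c]) (h c)"
    using sepD[OF PX u w e] by (rule walk_split_first[OF w])
  have "set (as' @ [c]) \<inter> C \<noteq> {}" using sepD[OF CP u es(3) es(2)] .
  moreover have "set (as' @ [c]) \<subseteq> set (as @ [e])" unfolding es(1) by auto
  ultimately show "set (as @ [e]) \<inter> C \<noteq> {}" by blast
qed

lemma walk_avoiding_cut_avoids_target:
  assumes "sep P X U" "u \<in> U" "is_walk Eg t h u es v" "set es \<inter> P = {}"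
  shows "set es \<inter> X = {}"
proof (rule ccontr)
  assume "set es \<inter> X \<noteq> {}"
  then obtain as c bs where "es = as @ c # bs" "c \<in> X" "is_walk Eg t h u (as @ [c]) (h c)"
    by (rule walk_split_first[OF assms(3)])
  with sepD[OF assms(1,2)] assms(4) show False by auto
qed

lemma min_cut_exists: "\<exists>C. min_cut C X U"
  using ex_has_least_nat[of "\<lambda>C. C \<subseteq> Eg \<and> sep C X U" Eg card] sep_all_edges
  unfolding min_cut_edges_def by blast

lemma min_cut_edge_reached:
  assumes P: "min_cut P X U" and e: "e \<in> P"
  shows "\<exists>u\<in>U. \<exists>as. is_walk Eg t h u (as @ [e]) (h e) \<and> set as \<inter> P = {}"
proof (rule ccontr)
  assume no: "\<not> ?thesis"
  have "sep (P - {e}) X U"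
  proof (rule sepI)
    fix u as x assume u: "u \<in> U" and w: "is_walk Eg t h u (as @ [x]) (h x)" and x: "x \<in> X"
    obtain as' c bs where es: "as @ [x] = as' @ c # bs" "c \<in> P" "set as' \<inter> P = {}"
        "is_walk Eg t h u (as' @ [c]) (h c)"
      using sepD[OF min_cutD(2)[OF P] u w x] by (rule walk_split_first[OF w])
    have "c \<noteq> e" using no u es(3,4) by blast
    moreover have "c \<in> set (as @ [x])" unfolding es(1) by simp
    ultimately show "set (as @ [x]) \<inter> (P - {e}) \<noteq> {}" using es(2) by blast
  qed
  then have "card P \<le> card (P - {e})" using min_cutD(1,3)[OF P] by blast
  moreover have "finite P" using min_cutD(1)[OF P] finite_edges finite_subset by blast
  ultimately show False using card_Diff1_less[OF _ e] by fastforce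
qed

lemma min_cut_edge_reaches_target:
  assumes P: "min_cut P X U" and p: "p \<in> P"
  shows "\<exists>bs. last (p # bs) \<in> X \<and> is_walk Eg t h (h p) bs (h (last (p # bs)))"
proof (rule ccontr)
  assume no: "\<not> ?thesis"
  have "sep (P - {p}) X U"
  proof (rule sepI)
    fix u as x assume u: "u \<in> U" and w: "is_walk Eg t h u (as @ [x]) (h x)" and x: "x \<in> X"
    have "p \<notin> set (as @ [x])"
    proof
      assume "p \<in> set (as @ [x])"
      then obtain as1 bs where sp: "as @ [x] = as1 @ p # bs" by (meson split_list)
      then have "last (as1 @ p # bs) = x" by (metis last_snoc)
      then have "last (p # bs) = x" by simp
      moreover have "is_walk Eg t h (h p) bs (h x)" using w unfolding sp by (auto simp: is_walk_append)
      ultimately show False using no x by metis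
    qed
    with sepD[OF min_cutD(2)[OF P] u w x] show "set (as @ [x]) \<inter> (P - {p}) \<noteq> {}" by blast
  qed
  then have "card P \<le> card (P - {p})" using min_cutD(1,3)[OF P] by blast
  moreover have "finite P" using min_cutD(1)[OF P] finite_edges finite_subset by blast
  ultimately show False using card_Diff1_less[OF _ p] by fastforce
qed

text \<open>Meet and join of two cuts: the meet takes the edges of \<open>P \<union> Q\<close> met first on a walk from \<open>U\<close>,
  the join the edges shielded from \<open>U\<close> by the other cut.  Together they use at most \<open>|P| + |Q|\<close>
  edges, so the meet of two minimum cuts is again minimum.\<close>

definition cut_meet :: "'v set \<Rightarrow> 'e set \<Rightarrow> 'e set \<Rightarrow> 'e set" where
  "cut_meet U P Q =
     {e \<in> P \<union> Q. \<exists>u\<in>U. \<exists>as. is_walk Eg t h u (as @ [e]) (h e) \<and> set as \<inter> (P \<union> Q) = {}}"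

definition cut_join :: "'v set \<Rightarrow> 'e set \<Rightarrow> 'e set \<Rightarrow> 'e set" where
  "cut_join U P Q = (P \<inter> Q)
     \<union> {e \<in> P - Q. \<forall>u\<in>U. \<forall>as. is_walk Eg t h u (as @ [e]) (h e) \<longrightarrow> set as \<inter> Q \<noteq> {}}
     \<union> {e \<in> Q - P. \<forall>u\<in>U. \<forall>as. is_walk Eg t h u (as @ [e]) (h e) \<longrightarrow> set as \<inter> P \<noteq> {}}"

lemma cut_meet_subset: "cut_meet U P Q \<subseteq> P \<union> Q"
  unfolding cut_meet_def by blast

lemma cut_join_subset: "cut_join U P Q \<subseteq> P \<union> Q"
  unfolding cut_join_def by blast

lemma walk_meets_cut_meet:
  assumes "set es \<inter> (P \<union> Q) \<noteq> {}" "u \<in> U" "is_walk Eg t h u es v"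
  shows "set es \<inter> cut_meet U P Q \<noteq> {}"
proof -
  obtain as c bs where "es = as @ c # bs" "c \<in> P \<union> Q" "set as \<inter> (P \<union> Q) = {}"
      "is_walk Eg t h u (as @ [c]) (h c)"
    using assms(3,1) by (rule walk_split_first)
  then show ?thesis unfolding cut_meet_def using assms(2) by auto
qed

lemma sep_cut_meet_left:
  assumes "sep P X U"
  shows "sep (cut_meet U P Q) X U"
proof (rule sepI)
  fix u as e assume "u \<in> U" "is_walk Eg t h u (as @ [e]) (h e)" "e \<in> X"
  moreover from sepD[OF assms this] have "set (as @ [e]) \<inter> (P \<union> Q) \<noteq> {}" by blast
  ultimately show "set (as @ [e]) \<inter> cut_meet U P Q \<noteq> {}" using walk_meets_cut_meet by blast
qed

lemma sep_cut_meet_cut_right: "sep (cut_meet U P Q) Q U"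
  by (rule sepI, rule walk_meets_cut_meet) auto

lemma sep_cut_join:
  assumes P: "sep P X U" and Q: "sep Q X U"
  shows "sep (cut_join U P Q) X U"
proof (rule sepI)
  fix u as e assume u: "u \<in> U" and w: "is_walk Eg t h u (as @ [e]) (h e)" and e: "e \<in> X"
  have "set (as @ [e]) \<inter> (P \<union> Q) \<noteq> {}" using sepD[OF P u w e] by blast
  then obtain as' c bs where es: "as @ [e] = as' @ c # bs" "c \<in> P \<union> Q" "set bs \<inter> (P \<union> Q) = {}"
      "is_walk Eg t h (h c) bs (h e)"
    by (rule walk_split_last[OF w])
  have "last (as' @ c # bs) = e" using es(1) by (metis last_snoc)
  then have "last (c # bs) = e" by simp
  then obtain bs' where cbs: "c # bs = bs' @ [e]" by (metis append_butlast_last_id list.distinct(1))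
  \<comment> \<open>every walk from \<open>U\<close> to \<open>c\<close> continues along \<open>bs\<close> to \<open>e \<in> X\<close>, so it meets any cut of \<open>X\<close>
      before or at \<open>c\<close>, since \<open>bs\<close> avoids both cuts\<close>
  have shielded: "set as'' \<inter> Z \<noteq> {}"
    if Z: "sep Z X U" "Z \<subseteq> P \<union> Q" "c \<notin> Z" and "u' \<in> U" "is_walk Eg t h u' (as'' @ [c]) (h c)"
    for Z u' as''
  proof -
    have "is_walk Eg t h u' (as'' @ c # bs) (h e)" using that(5) es(4) by (auto simp: is_walk_append)
    then have "is_walk Eg t h u' ((as'' @ bs') @ [e]) (h e)" using cbs by simp
    from sepD[OF Z(1) that(4) this e] have "(set as'' \<union> set (c # bs)) \<inter> Z \<noteq> {}"
      using cbs by (simp add: Un_assoc)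
    then show ?thesis using es(3) Z(2,3) by auto
  qed
  have "c \<in> cut_join U P Q"
    unfolding cut_join_def using es(2) shielded[OF P] shielded[OF Q] by blast
  moreover have "c \<in> set (as @ [e])" unfolding es(1) by simp
  ultimately show "set (as @ [e]) \<inter> cut_join U P Q \<noteq> {}" by blast
qed

lemma card_cut_meet_join_le:
  assumes "P \<subseteq> Eg" "Q \<subseteq> Eg"
  shows "card (cut_meet U P Q) + card (cut_join U P Q) \<le> card P + card Q"
proof -
  have fin: "finite P" "finite Q" using assms finite_edges finite_subset by auto
  have union: "cut_meet U P Q \<union> cut_join U P Q \<subseteq> P \<union> Q"
    using cut_meet_subset cut_join_subset by blast
  have inter: "cut_meet U P Q \<inter> cut_join U P Q \<subseteq> P \<inter> Q"
    unfolding cut_meet_def cut_join_def by blast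
  have "card (cut_meet U P Q) + card (cut_join U P Q)
      = card (cut_meet U P Q \<union> cut_join U P Q) + card (cut_meet U P Q \<inter> cut_join U P Q)"
    using union fin by (intro card_Un_Int) (auto intro: finite_subset)
  also have "\<dots> \<le> card (P \<union> Q) + card (P \<inter> Q)"
    using union inter fin by (intro add_mono card_mono) auto
  also have "\<dots> = card P + card Q" by (rule card_Un_Int[OF fin, symmetric])
  finally show ?thesis .
qed

lemma min_cut_cut_meet:
  assumes P: "min_cut P X U" and Q: "min_cut Q X U"
  shows "min_cut (cut_meet U P Q) X U"
proof -
  have sub: "cut_meet U P Q \<subseteq> Eg" "cut_join U P Q \<subseteq> Eg"
    using cut_meet_subset cut_join_subset min_cutD(1)[OF P] min_cutD(1)[OF Q] by blast+
  have "card P \<le> card (cut_join U P Q)" "card P = card Q"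
    using min_cutD(3)[OF P sub(2) sep_cut_join[OF min_cutD(2)[OF P] min_cutD(2)[OF Q]]]
      min_cutD[OF P] min_cutD[OF Q] by (auto intro: antisym)
  then have "card (cut_meet U P Q) \<le> card P"
    using card_cut_meet_join_le[OF min_cutD(1)[OF P] min_cutD(1)[OF Q], of U] by linarith
  then show ?thesis
    using min_cutD(3)[OF P] by (intro min_cutI[OF sub(1) sep_cut_meet_left[OF min_cutD(2)[OF P]]])
      (meson le_trans)
qed

definition reached_avoiding :: "'v set \<Rightarrow> 'e set \<Rightarrow> 'e set" where
  "reached_avoiding U P = {e. \<exists>u\<in>U. \<exists>as. is_walk Eg t h u (as @ [e]) (h e) \<and> set (as @ [e]) \<inter> P = {}}"

lemma finite_reached_avoiding: "finite (reached_avoiding U P)"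
proof -
  have "reached_avoiding U P \<subseteq> Eg" unfolding reached_avoiding_def by (auto dest!: is_walk_edges_subset)
  then show ?thesis using finite_edges finite_subset by blast
qed

lemma reached_avoiding_cut_meet: "reached_avoiding U (cut_meet U P Q) \<subseteq> reached_avoiding U P"
  unfolding reached_avoiding_def using walk_meets_cut_meet by blast

text \<open>Among the minimum cuts, one that leaves the fewest edges reachable from \<open>U\<close> is primary: its
  meet with any other minimum cut is minimum and leaves no more edges reachable, hence equally many.\<close>

lemma primary_cut_exists: "\<exists>C. primary_cut C X U"
proof -
  obtain P where P: "min_cut P X U"
    and least: "\<And>C. min_cut C X U \<Longrightarrow> card (reached_avoiding U P) \<le> card (reached_avoiding U C)"
    using min_cut_exists ex_has_least_nat[of "\<lambda>C. min_cut C X U" _ "\<lambda>C. card (reached_avoiding U C)"]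
    by blast
  have "sep P Q U" if Q: "min_cut Q X U" for Q
  proof (rule sepI)
    have same: "reached_avoiding U (cut_meet U P Q) = reached_avoiding U P"
      using card_seteq[OF finite_reached_avoiding reached_avoiding_cut_meet
          least[OF min_cut_cut_meet[OF P Q]]] .
    fix u as e assume u: "u \<in> U" and w: "is_walk Eg t h u (as @ [e]) (h e)" and e: "e \<in> Q"
    show "set (as @ [e]) \<inter> P \<noteq> {}"
    proof
      assume "set (as @ [e]) \<inter> P = {}"
      then have "e \<in> reached_avoiding U (cut_meet U P Q)"
        unfolding same unfolding reached_avoiding_def using u w by blast
      then obtain u' as' where u': "u' \<in> U" "is_walk Eg t h u' (as' @ [e]) (h e)"
          "set (as' @ [e]) \<inter> cut_meet U P Q = {}"
        unfolding reached_avoiding_def by blast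
      from sepD[OF sep_cut_meet_cut_right u'(1,2) e] u'(3) show False by blast
    qed
  qed
  with P show ?thesis unfolding primary_cut_edges_def by blast
qed

lemma primary_cut_unique:
  assumes "primary_cut P1 X U" "primary_cut P2 X U"
  shows "P1 = P2"
proof -
  have "A \<subseteq> B" if A: "primary_cut A X U" and B: "primary_cut B X U" for A B
  proof
    fix e assume e: "e \<in> A"
    obtain u as where u: "u \<in> U" "is_walk Eg t h u (as @ [e]) (h e)" "set as \<inter> A = {}"
      using min_cut_edge_reached[OF primary_cutD(1)[OF A] e] by blast
    have BA: "sep B A U" and AB: "sep A B U"
      using primary_cutD[OF A] primary_cutD[OF B] by blast+
    show "e \<in> B"
    proof (rule ccontr)
      assume "e \<notin> B"
      with sepD[OF BA u(1,2) e] obtain z where z: "z \<in> set as" "z \<in> B" by auto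
      then obtain as1 as2 where as: "as = as1 @ z # as2" by (meson split_list)
      then have "is_walk Eg t h u (as1 @ [z]) (h z)" using u(2) by (auto simp: is_walk_append)
      from sepD[OF AB u(1) this z(2)] u(3) show False unfolding as by auto
    qed
  qed
  with assms show ?thesis by blast
qed

lemma the_primary_cut:
  assumes "primary_cut C X U"
  shows "(THE C. primary_cut C X U) = C"
  using assms primary_cut_unique[OF _ assms] by (rule the_equality)

lemma primary_cut_self:
  assumes Pp: "primary_cut P X U"
  shows "primary_cut P P U"
proof -
  have P: "min_cut P X U" using primary_cutD(1)[OF Pp] .
  have PP: "min_cut P P U"
  proof (rule min_cutI[OF min_cutD(1)[OF P] sep_refl])
    fix C assume "C \<subseteq> Eg" "sep C P U"
    from min_cutD(3)[OF P this(1) sep_trans[OF this(2) min_cutD(2)[OF P]]] show "card P \<le> card C" .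
  qed
  have "sep P C U" if C: "min_cut C P U" for C
  proof -
    have "card C \<le> card P" using min_cutD(3)[OF C min_cutD(1)[OF P] sep_refl] .
    have "min_cut C X U"
    proof (rule min_cutI[OF min_cutD(1)[OF C] sep_trans[OF min_cutD(2)[OF C] min_cutD(2)[OF P]]])
      fix C' assume "C' \<subseteq> Eg" "sep C' X U"
      from min_cutD(3)[OF P this] show "card C \<le> card C'" using \<open>card C \<le> card P\<close> by linarith
    qed
    then show ?thesis using primary_cutD(2)[OF Pp] by blast
  qed
  with PP show ?thesis unfolding primary_cut_edges_def by blast
qed

lemma sep_nodes_sink_iff:
  assumes "\<rho> \<notin> U"
  shows "sep_nodes Eg t h C {\<rho>} U \<longleftrightarrow> sep C (in_edges Eg h \<rho>) U"
proof
  assume L: "sep_nodes Eg t h C {\<rho>} U"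
  show "sep C (in_edges Eg h \<rho>) U"
  proof (rule sepI)
    fix u as e assume u: "u \<in> U" and w: "is_walk Eg t h u (as @ [e]) (h e)" and "e \<in> in_edges Eg h \<rho>"
    then have "is_walk Eg t h u (as @ [e]) \<rho>" unfolding in_edges_def by simp
    with L u show "set (as @ [e]) \<inter> C \<noteq> {}" unfolding sep_nodes_def by blast
  qed
next
  assume R: "sep C (in_edges Eg h \<rho>) U"
  show "sep_nodes Eg t h C {\<rho>} U"
    unfolding sep_nodes_def
  proof (intro ballI allI impI)
    fix u x es assume u: "u \<in> U" and x: "x \<in> {\<rho>}" and w: "is_walk Eg t h u es x"
    have "es \<noteq> []" using w u x assms by auto
    then obtain as e where es: "es = as @ [e]" by (metis append_butlast_last_id)
    then have "e \<in> in_edges Eg h \<rho>" "is_walk Eg t h u (as @ [e]) (h e)"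
      using w x unfolding in_edges_def by (auto simp: is_walk_append)
    from sepD[OF R u this(2,1)] show "set es \<inter> C \<noteq> {}" unfolding es .
  qed
qed

lemma primary_cut_nodes_sink_iff:
  "\<rho> \<notin> U \<Longrightarrow> primary_cut_nodes Eg t h C {\<rho>} U \<longleftrightarrow> primary_cut C (in_edges Eg h \<rho>) U"
  unfolding primary_cut_nodes_def primary_cut_edges_def min_cut_nodes_def min_cut_edges_def
  by (simp add: sep_nodes_sink_iff)

lemma sep_subset: "sep C X U \<Longrightarrow> Y \<subseteq> X \<Longrightarrow> sep C Y U"
  unfolding sep_edges_def by blast

lemma sep_single_tail:
  assumes "sep Z {e} U" "e \<notin> Z" "e \<in> Eg"
  shows "t e \<notin> U"
proof
  assume "t e \<in> U"
  moreover have "is_walk Eg t h (t e) ([] @ [e]) (h e)" using assms(3) by simp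
  ultimately show False using sepD[OF assms(1)] assms(2) by fastforce
qed

lemma sep_single_in_edge:
  assumes "sep Z {e} U" "e \<notin> Z" "e \<in> Eg" "h d = t e"
  shows "sep Z {d} U"
proof (rule sepI)
  fix u as x assume u: "u \<in> U" and w: "is_walk Eg t h u (as @ [x]) (h x)" and "x \<in> {d}"
  then have "is_walk Eg t h u ((as @ [x]) @ [e]) (h e)" using assms(3,4) by (auto simp: is_walk_append)
  from sepD[OF assms(1) u this] assms(2) show "set (as @ [x]) \<inter> Z \<noteq> {}" by auto
qed

lemma sep_in_edges_of_sep_nodes_residual:
  assumes "sep_nodes (Eg - W) t h K {\<rho>} U"
  shows "sep (W \<union> K) (in_edges Eg h \<rho>) U"
proof (rule sepI)
  fix u as e assume u: "u \<in> U" and w: "is_walk Eg t h u (as @ [e]) (h e)" and e: "e \<in> in_edges Eg h \<rho>"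
  show "set (as @ [e]) \<inter> (W \<union> K) \<noteq> {}"
  proof (cases "set (as @ [e]) \<inter> W = {}")
    case True
    from w True have "is_walk (Eg - W) t h u (as @ [e]) (h e)" by (rule is_walk_Diff)
    with e have "is_walk (Eg - W) t h u (as @ [e]) \<rho>" unfolding in_edges_def by simp
    with assms u have "set (as @ [e]) \<inter> K \<noteq> {}" unfolding sep_nodes_def by blast
    then show ?thesis by blast
  qed blast
qed

end

locale network_model =
  fixes V :: "'v set" and E :: "'e set" and tlE hdE :: "'e \<Rightarrow> 'v" and S :: "'v set" and \<rho> :: 'v
  assumes network: "network V E tlE hdE S \<rho>"
begin

lemma finite_E: "finite E"
  and tail_in_V: "e \<in> E \<Longrightarrow> tlE e \<in> V"
  and acyclic: "is_walk E tlE hdE v es v \<Longrightarrow> es = []"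
  and sources_eq: "S = {v \<in> V. in_edges E hdE v = {}}"
  and sink_in_V: "\<rho> \<in> V" and sink_not_source: "\<rho> \<notin> S"
  and reaches_sink: "v \<in> V - {\<rho>} \<Longrightarrow> \<exists>es. is_walk E tlE hdE v es \<rho>"
  using network unfolding network_def by auto

lemma finite_S: "finite S"
  using network unfolding network_def by auto

sublocale edge_cuts E tlE hdE
  using finite_E by unfold_locales

lemma walk_distinct: "is_walk E tlE hdE u es v \<Longrightarrow> distinct es"
proof (rule ccontr)
  assume w: "is_walk E tlE hdE u es v" and "\<not> distinct es"
  then obtain xs ys zs y where "es = xs @ [y] @ ys @ [y] @ zs" using not_distinct_decomp by blast
  with w have "is_walk E tlE hdE (tlE y) (y # ys) (tlE y)" by (auto simp: is_walk_append)
  from acyclic[OF this] show False by simp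
qed

lemma length_walk_le: "is_walk E tlE hdE u es v \<Longrightarrow> length es \<le> card E"
  using walk_distinct distinct_card card_mono[OF finite_E is_walk_edges_subset] by metis

text \<open>Going backwards along input edges must stop at a source, since walks have at most \<open>|E|\<close> edges.\<close>

lemma walk_extends_to_source:
  "is_walk E tlE hdE v es x \<Longrightarrow> v \<in> V \<Longrightarrow> \<exists>\<sigma>\<in>S. \<exists>as. is_walk E tlE hdE \<sigma> (as @ es) x"
proof (induction "card E - length es" arbitrary: v es rule: less_induct)
  case less
  show ?case
  proof (cases "v \<in> S")
    case True
    then show ?thesis using less.prems by (metis append.left_neutral)
  next
    case False
    then obtain d where d: "d \<in> E" "hdE d = v" using sources_eq less.prems(2) unfolding in_edges_def by blast
    then have w: "is_walk E tlE hdE (tlE d) (d # es) x" using less.prems(1) by simp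
    have "card E - length (d # es) < card E - length es" using length_walk_le[OF w] by simp
    from less.hyps[OF this w tail_in_V[OF d(1)]] show ?thesis by (metis append.assoc append_Cons append_Nil)
  qed
qed

lemma reaches_edge_iff:
  "reaches_edge E tlE hdE \<sigma> e \<longleftrightarrow> (\<exists>as. is_walk E tlE hdE \<sigma> (as @ [e]) (hdE e))"
  unfolding reaches_edge_def by (metis append_butlast_last_id last_snoc snoc_eq_iff_butlast)

abbreviation "D W \<equiv> D_set E tlE hdE S W"

lemma mem_D_set_iff: "\<sigma> \<in> D W \<longleftrightarrow> \<sigma> \<in> S \<and> (\<exists>e\<in>W. \<exists>as. is_walk E tlE hdE \<sigma> (as @ [e]) (hdE e))"
  unfolding D_set_def reaches_edge_iff by blast

lemma D_set_subset: "D W \<subseteq> S"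
  unfolding D_set_def by blast

lemma sink_notin_D_set: "\<rho> \<notin> D W"
  using D_set_subset sink_not_source by blast

lemma D_set_nonempty:
  assumes "W \<subseteq> E" "W \<noteq> {}"
  shows "D W \<noteq> {}"
proof -
  obtain e where e: "e \<in> W" "e \<in> E" using assms by blast
  then have "is_walk E tlE hdE (tlE e) [e] (hdE e)" by simp
  from walk_extends_to_source[OF this tail_in_V[OF e(2)]]
  obtain \<sigma> as where "\<sigma> \<in> S" "is_walk E tlE hdE \<sigma> (as @ [e]) (hdE e)" by blast
  with e(1) have "\<sigma> \<in> D W" unfolding mem_D_set_iff by blast
  then show ?thesis by blast
qed

lemma D_set_out_edge:
  assumes "\<sigma> \<in> S"
  obtains e where "e \<in> E" "D {e} = {\<sigma>}"
proof -
  have \<sigma>: "\<sigma> \<in> V - {\<rho>}" using assms sources_eq sink_not_source by blast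
  then obtain es where es: "is_walk E tlE hdE \<sigma> es \<rho>" using reaches_sink by blast
  then obtain e es' where "es = e # es'" using \<sigma> by (cases es) auto
  then have e: "e \<in> E" "tlE e = \<sigma>" using es by auto
  have only: "\<sigma>' = \<sigma>" if "\<sigma>' \<in> S" "is_walk E tlE hdE \<sigma>' (as @ [e]) (hdE e)" for \<sigma>' as
  proof (cases as rule: rev_cases)
    case Nil
    then show ?thesis using that e by simp
  next
    case (snoc as' d)
    then have "d \<in> in_edges E hdE \<sigma>" using that(2) e unfolding in_edges_def by (auto simp: is_walk_append)
    then show ?thesis using assms sources_eq by blast
  qed
  have "is_walk E tlE hdE \<sigma> ([] @ [e]) (hdE e)" using e by simp
  with assms have "\<sigma> \<in> D {e}" unfolding mem_D_set_iff by blast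
  moreover have "D {e} \<subseteq> {\<sigma>}" using only by (auto simp: mem_D_set_iff)
  ultimately have "D {e} = {\<sigma>}" by blast
  with e(1) show ?thesis by (rule that)
qed

abbreviation "I C \<equiv> I_set E tlE hdE S \<rho> C"

lemma I_set_mono:
  assumes "C \<subseteq> C'"
  shows "I C \<subseteq> I C'"
proof -
  have "is_walk (E - C) tlE hdE \<sigma> es \<rho>" if "is_walk (E - C') tlE hdE \<sigma> es \<rho>" for \<sigma> es
    using is_walk_mono[OF that] is_walk_edges_subset[OF that] assms by blast
  then show ?thesis unfolding I_set_def by blast
qed

lemma walk_to_sink_meets_cut:
  assumes "\<sigma> \<in> I C" "is_walk E' tlE hdE \<sigma> es \<rho>" "E' \<subseteq> E"
  shows "set es \<inter> C \<noteq> {}"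
proof
  assume "set es \<inter> C = {}"
  moreover have "is_walk E tlE hdE \<sigma> es \<rho>"
    using is_walk_mono[OF assms(2)] is_walk_edges_subset[OF assms(2)] assms(3) by blast
  ultimately have "is_walk (E - C) tlE hdE \<sigma> es \<rho>" by (intro is_walk_Diff)
  with assms(1) show False unfolding I_set_def by blast
qed

text \<open>The message on \<open>e\<close> is a function of the data at the sources outside \<open>T\<close> and of the messages
  on any edge set \<open>Z\<close> separating \<open>e\<close> from \<open>T\<close>; induction on the length of the longest walk ending in \<open>e\<close>.\<close>

context
  fixes \<Omega> :: "(('v \<Rightarrow> 'm) \<times> ('v \<Rightarrow> 'k)) set" and y :: "'e \<Rightarrow> ('v \<Rightarrow> 'm) \<times> ('v \<Rightarrow> 'k) \<Rightarrow> 'a"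
    and enc phi z T Z \<omega> \<omega>'
  assumes source: "\<And>\<omega> e. \<omega> \<in> \<Omega> \<Longrightarrow> e \<in> E \<Longrightarrow> tlE e \<in> S \<Longrightarrow> y e \<omega> = enc e (fst \<omega> (tlE e)) (snd \<omega> (tlE e))"
    and inner: "\<And>\<omega> e. \<omega> \<in> \<Omega> \<Longrightarrow> e \<in> E \<Longrightarrow> tlE e \<notin> S \<Longrightarrow>
            y e \<omega> = phi e (\<lambda>d. if d \<in> in_edges E hdE (tlE e) then y d \<omega> else z)"
    and \<omega>: "\<omega> \<in> \<Omega>" "\<omega>' \<in> \<Omega>"
    and agree: "\<And>\<sigma>. \<sigma> \<in> S - T \<Longrightarrow> fst \<omega> \<sigma> = fst \<omega>' \<sigma> \<and> snd \<omega> \<sigma> = snd \<omega>' \<sigma>"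
    and agree_Z: "\<And>d. d \<in> Z \<Longrightarrow> y d \<omega> = y d \<omega>'"
begin

lemma edge_function_determined_bounded:
  assumes "e \<in> E" "sep Z {e} T" "\<And>v as. is_walk E tlE hdE v (as @ [e]) (hdE e) \<Longrightarrow> length as < k"
  shows "y e \<omega> = y e \<omega>'"
  using assms
proof (induction k arbitrary: e)
  case 0
  then show ?case using "0.prems"(1) "0.prems"(3)[of "tlE e" "[]"] by simp
next
  case (Suc k)
  consider "e \<in> Z" | "e \<notin> Z" "tlE e \<in> S" | "e \<notin> Z" "tlE e \<notin> S" by blast
  then show ?case
  proof cases
    case 1
    then show ?thesis by (rule agree_Z)
  next
    case 2
    then have "tlE e \<in> S - T" using sep_single_tail[OF Suc.prems(2) _ Suc.prems(1)] by blast
    then show ?thesis using source[OF \<omega>(1) Suc.prems(1) 2(2)] source[OF \<omega>(2) Suc.prems(1) 2(2)] agree by simp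
  next
    case 3
    have "y d \<omega> = y d \<omega>'" if d: "d \<in> in_edges E hdE (tlE e)" for d
    proof (rule Suc.IH)
      show "d \<in> E" using d unfolding in_edges_def by blast
      show "sep Z {d} T"
        using d sep_single_in_edge[OF Suc.prems(2) 3(1) Suc.prems(1)] unfolding in_edges_def by blast
      fix v as assume "is_walk E tlE hdE v (as @ [d]) (hdE d)"
      then have "is_walk E tlE hdE v ((as @ [d]) @ [e]) (hdE e)"
        using d Suc.prems(1) unfolding in_edges_def by (auto simp: is_walk_append)
      from Suc.prems(3)[OF this] show "length as < k" by simp
    qed
    then have "(\<lambda>d. if d \<in> in_edges E hdE (tlE e) then y d \<omega> else z)
        = (\<lambda>d. if d \<in> in_edges E hdE (tlE e) then y d \<omega>' else z)" by auto
    then show ?thesis using inner[OF \<omega>(1) Suc.prems(1) 3(2)] inner[OF \<omega>(2) Suc.prems(1) 3(2)] by simp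
  qed
qed

lemma edge_function_determined:
  assumes "e \<in> E" "sep Z {e} T"
  shows "y e \<omega> = y e \<omega>'"
proof (rule edge_function_determined_bounded[OF assms])
  fix v as assume "is_walk E tlE hdE v (as @ [e]) (hdE e)"
  from length_walk_le[OF this] show "length as < Suc (card E)" by simp
qed

end

end

section \<open>The cuts \<open>Wh W\<close> and \<open>Cs W\<close>\<close>

context network_model
begin

abbreviation "Wh W \<equiv> W_hat E tlE hdE S W"
abbreviation "Cs W \<equiv> C_star E tlE hdE S \<rho> W"

lemma W_hat_primary: "primary_cut (Wh W) W (D W)"
  unfolding W_hat_def using primary_cut_exists the_primary_cut by metis

lemma min_cut_W_hat: "min_cut (Wh W) W (D W)"
  using primary_cutD(1)[OF W_hat_primary] .

lemma W_hat_subset: "Wh W \<subseteq> E"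
  using min_cutD(1)[OF min_cut_W_hat] .

lemma card_W_hat_le: "W \<subseteq> E \<Longrightarrow> card (Wh W) \<le> card W"
  using min_cutD(3)[OF min_cut_W_hat _ sep_refl] .

lemma D_set_W_hat: "D (Wh W) = D W"
proof
  show "D (Wh W) \<subseteq> D W"
  proof
    fix \<sigma> assume "\<sigma> \<in> D (Wh W)"
    then obtain p as where s: "\<sigma> \<in> S" "p \<in> Wh W" "is_walk E tlE hdE \<sigma> (as @ [p]) (hdE p)"
      unfolding mem_D_set_iff by blast
    obtain bs where bs: "last (p # bs) \<in> W" "is_walk E tlE hdE (hdE p) bs (hdE (last (p # bs)))"
      using min_cut_edge_reaches_target[OF min_cut_W_hat s(2)] by blast
    have "is_walk E tlE hdE \<sigma> (as @ p # bs) (hdE (last (p # bs)))"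
      using s(3) bs(2) by (auto simp: is_walk_append)
    moreover have "as @ p # bs = butlast (as @ p # bs) @ [last (p # bs)]"
      by (metis append_butlast_last_id last_appendR list.distinct(1) Nil_is_append_conv)
    ultimately show "\<sigma> \<in> D W" unfolding mem_D_set_iff using s(1) bs(1) by metis
  qed
next
  show "D W \<subseteq> D (Wh W)"
  proof
    fix \<sigma> assume \<sigma>: "\<sigma> \<in> D W"
    then obtain e as where s: "\<sigma> \<in> S" "e \<in> W" "is_walk E tlE hdE \<sigma> (as @ [e]) (hdE e)"
      unfolding mem_D_set_iff by blast
    obtain as' c bs where "c \<in> Wh W" "is_walk E tlE hdE \<sigma> (as' @ [c]) (hdE c)"
      using sepD[OF min_cutD(2)[OF min_cut_W_hat] \<sigma> s(3,2)] by (rule walk_split_first[OF s(3)])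
    then show "\<sigma> \<in> D (Wh W)" unfolding mem_D_set_iff using s(1) by blast
  qed
qed

lemma W_hat_W_hat: "Wh (Wh W) = Wh W"
  using the_primary_cut[OF primary_cut_self[OF W_hat_primary]]
  unfolding W_hat_def[of E tlE hdE S "Wh W"] D_set_W_hat .

lemma W_hat_in_W'_r:
  assumes "W \<in> W_r E r" "W \<noteq> {}"
  shows "Wh W \<in> W'_r E tlE hdE S r"
proof -
  have "W \<subseteq> E" "card W \<le> r" using assms(1) unfolding W_r_def by auto
  moreover have "Wh W \<noteq> {}"
    using D_set_nonempty[OF \<open>W \<subseteq> E\<close> assms(2)] D_set_W_hat[of W] by (auto simp: D_set_def)
  moreover have "card (Wh W) \<le> r" using card_W_hat_le[OF \<open>W \<subseteq> E\<close>] \<open>card W \<le> r\<close> by linarith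
  ultimately show ?thesis unfolding W'_r_def W_r_def using W_hat_subset W_hat_W_hat by simp
qed

lemma C_star_min_cut: "min_cut_nodes (E - W) tlE hdE (Cs W) {\<rho>} (D W)"
proof -
  interpret G: edge_cuts "E - W" tlE hdE
    using finite_E by unfold_locales simp
  obtain P where P: "G.primary_cut P (in_edges (E - W) hdE \<rho>) (D W)"
    using G.primary_cut_exists by blast
  have "Cs W = P"
    unfolding C_star_def G.primary_cut_nodes_sink_iff[OF sink_notin_D_set] using G.the_primary_cut[OF P] .
  with P show ?thesis
    unfolding G.primary_cut_nodes_sink_iff[OF sink_notin_D_set, symmetric] primary_cut_nodes_def by simp
qed

lemma C_star_subset: "Cs W \<subseteq> E - W"
  and sep_nodes_C_star: "sep_nodes (E - W) tlE hdE (Cs W) {\<rho>} (D W)"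
  and card_C_star_le: "K \<subseteq> E - W \<Longrightarrow> sep_nodes (E - W) tlE hdE K {\<rho>} (D W) \<Longrightarrow> card (Cs W) \<le> card K"
  using C_star_min_cut[of W] unfolding min_cut_nodes_def by blast+

text \<open>Replacing \<open>W\<close> by \<open>Wh W\<close> keeps the sources \<open>D\<^sub>W\<close>, and a walk from them that avoids \<open>Wh W\<close>
  also avoids \<open>W\<close>; so every cut separating \<open>\<rho>\<close> from \<open>D\<^sub>W\<close> in \<open>\<G>\<^sub>W\<close> does so in \<open>\<G>\<^bsub>Wh W\<^esub>\<close>.\<close>

lemma card_C_star_W_hat_le:
  assumes K: "K \<subseteq> E - W" "sep_nodes (E - W) tlE hdE K {\<rho>} (D W)"
  shows "card (Cs (Wh W)) \<le> card K"
proof -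
  have "sep_nodes (E - Wh W) tlE hdE (K - Wh W) {\<rho>} (D (Wh W))"
    unfolding sep_nodes_def
  proof (intro ballI allI impI)
    fix \<sigma> x es assume \<sigma>: "\<sigma> \<in> D (Wh W)" and x: "x \<in> {\<rho>}" and w: "is_walk (E - Wh W) tlE hdE \<sigma> es x"
    have es: "set es \<subseteq> E - Wh W" using is_walk_edges_subset[OF w] .
    then have wE: "is_walk E tlE hdE \<sigma> es x" using is_walk_mono[OF w] by blast
    have "set es \<inter> W = {}"
      using walk_avoiding_cut_avoids_target[OF min_cutD(2)[OF min_cut_W_hat] _ wE] \<sigma> es
      unfolding D_set_W_hat by blast
    then have "is_walk (E - W) tlE hdE \<sigma> es x" by (rule is_walk_Diff[OF wE])
    then have "set es \<inter> K \<noteq> {}" using K(2) \<sigma> x unfolding sep_nodes_def D_set_W_hat by blast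
    then show "set es \<inter> (K - Wh W) \<noteq> {}" using es by blast
  qed
  then have "card (Cs (Wh W)) \<le> card (K - Wh W)"
    using card_C_star_le[of "K - Wh W" "Wh W"] K(1) by blast
  also have "\<dots> \<le> card K" using K(1) finite_E by (intro card_mono) (auto intro: finite_subset)
  finally show ?thesis .
qed

end

section \<open>The two descriptions of the bound agree\<close>

context network_model
begin

abbreviation "C_star_values r \<equiv> {card (Cs W) | W. W \<in> W'_r E tlE hdE S r}"

abbreviation "cut_pair_values r \<equiv> {card C - card W | W C. W \<in> W_r E r \<and> C \<in> Lambda_set E tlE hdE S \<rho>
                 \<and> W \<subseteq> C \<and> D W \<subseteq> I C}"

lemma card_C_star_in_cut_pair_values:
  assumes W: "W \<in> W'_r E tlE hdE S r"
  shows "card (Cs W) \<in> cut_pair_values r"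
proof -
  have W_r: "W \<in> W_r E r" and "W \<noteq> {}" and WE: "W \<subseteq> E"
    using W unfolding W'_r_def W_r_def by auto
  define C where "C = W \<union> Cs W"
  have "D W \<subseteq> I C"
  proof
    fix \<sigma> assume \<sigma>: "\<sigma> \<in> D W"
    have "\<not> is_walk (E - C) tlE hdE \<sigma> es \<rho>" for es
    proof
      assume w: "is_walk (E - C) tlE hdE \<sigma> es \<rho>"
      then have es: "set es \<subseteq> E - C" by (rule is_walk_edges_subset)
      then have "is_walk (E - W) tlE hdE \<sigma> es \<rho>" using is_walk_mono[OF w] unfolding C_def by blast
      with sep_nodes_C_star \<sigma> have "set es \<inter> Cs W \<noteq> {}" unfolding sep_nodes_def by blast
      with es show False unfolding C_def by blast
    qed
    with \<sigma> D_set_subset show "\<sigma> \<in> I C" unfolding I_set_def by blast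
  qed
  moreover have "C \<in> Lambda_set E tlE hdE S \<rho>"
    unfolding Lambda_set_def C_def
    using calculation C_star_subset WE D_set_nonempty[OF WE \<open>W \<noteq> {}\<close>] by (auto simp: C_def)
  moreover have "card (Cs W) = card C - card W"
    unfolding C_def using C_star_subset[of W] WE finite_E
    by (subst card_Un_disjoint) (auto intro: finite_subset)
  ultimately show ?thesis using W_r unfolding C_def by blast
qed

lemma card_C_star_W_hat_le_cut_pair:
  assumes "W \<subseteq> C" "C \<subseteq> E" "D W \<subseteq> I C"
  shows "card (Cs (Wh W)) \<le> card C - card W"
proof -
  have "sep_nodes (E - W) tlE hdE (C - W) {\<rho>} (D W)"
    unfolding sep_nodes_def
  proof (intro ballI allI impI)
    fix \<sigma> x es assume \<sigma>: "\<sigma> \<in> D W" and "x \<in> {\<rho>}" and w: "is_walk (E - W) tlE hdE \<sigma> es x"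
    then have "is_walk (E - W) tlE hdE \<sigma> es \<rho>" by simp
    with \<sigma> assms(3) have "set es \<inter> C \<noteq> {}" using walk_to_sink_meets_cut[OF _ _ Diff_subset] by blast
    moreover have "set es \<inter> W = {}" using is_walk_edges_subset[OF w] by blast
    ultimately show "set es \<inter> (C - W) \<noteq> {}" by blast
  qed
  moreover have "C - W \<subseteq> E - W" using assms(2) by blast
  ultimately have "card (Cs (Wh W)) \<le> card (C - W)" using card_C_star_W_hat_le by blast
  also have "\<dots> = card C - card W"
    using assms(1,2) finite_E by (intro card_Diff_subset) (auto intro: finite_subset)
  finally show ?thesis .
qed

text \<open>For \<open>W = {}\<close> the bound is met by the single edge \<open>e\<close> out of a source \<open>\<sigma> \<in> I\<^sub>C\<close>, for which
  \<open>D\<^bsub>{e}\<^esub> = {\<sigma>}\<close>; this is where \<open>r \<ge> 1\<close> is needed.\<close>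

lemma cut_pair_value_ge_C_star:
  assumes "1 \<le> r" "W \<in> W_r E r" "C \<in> Lambda_set E tlE hdE S \<rho>" "W \<subseteq> C" "D W \<subseteq> I C"
  shows "\<exists>W'\<in>W'_r E tlE hdE S r. card (Cs W') \<le> card C - card W"
proof (cases "W = {}")
  case False
  have "C \<subseteq> E" using assms(3) unfolding Lambda_set_def by blast
  with assms(4) have "card (Cs (Wh W)) \<le> card C - card W"
    using assms(5) by (rule card_C_star_W_hat_le_cut_pair)
  with W_hat_in_W'_r[OF assms(2) False] show ?thesis by (rule rev_bexI)
next
  case True
  obtain \<sigma> where \<sigma>: "\<sigma> \<in> I C" and "C \<subseteq> E" using assms(3) unfolding Lambda_set_def by blast
  then have "\<sigma> \<in> S" unfolding I_set_def by blast
  then obtain e where e: "e \<in> E" "D {e} = {\<sigma>}" by (rule D_set_out_edge)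
  have "I C \<subseteq> I (insert e C)" by (rule I_set_mono) blast
  with e(2) \<sigma> have "D {e} \<subseteq> I (insert e C)" by auto
  then have "card (Cs (Wh {e})) \<le> card (insert e C) - card {e}"
    using \<open>C \<subseteq> E\<close> e(1) by (intro card_C_star_W_hat_le_cut_pair) auto
  also have "\<dots> \<le> card C - card W"
    using True finite_subset[OF \<open>C \<subseteq> E\<close> finite_E] by (simp add: card_insert_if)
  finally have "card (Cs (Wh {e})) \<le> card C - card W" .
  moreover have "Wh {e} \<in> W'_r E tlE hdE S r"
    using e(1) assms(1) by (intro W_hat_in_W'_r) (auto simp: W_r_def)
  ultimately show ?thesis by (rule bexI)
qed

lemma finite_C_star_values: "finite (C_star_values r)"
proof -
  have "W'_r E tlE hdE S r \<subseteq> Pow E" unfolding W'_r_def W_r_def by auto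
  then have "finite (W'_r E tlE hdE S r)" by (rule finite_subset) (simp add: finite_E)
  then show ?thesis by (simp add: setcompr_eq_image)
qed

lemma finite_cut_pair_values: "finite (cut_pair_values r)"
proof (rule finite_subset)
  show "cut_pair_values r \<subseteq> {..card E}"
  proof
    fix x assume "x \<in> cut_pair_values r"
    then obtain W C :: "'e set" where "x = card C - card W" "C \<subseteq> E" unfolding Lambda_set_def by blast
    then show "x \<in> {..card E}" using card_mono[OF finite_E, of C] by simp
  qed
qed simp

lemma C_star_values_nonempty:
  assumes "1 \<le> r"
  shows "C_star_values r \<noteq> {}"
proof -
  have "in_edges E hdE \<rho> \<noteq> {}" using sources_eq sink_in_V sink_not_source by blast
  then obtain e where "e \<in> E" unfolding in_edges_def by blast
  with assms have "Wh {e} \<in> W'_r E tlE hdE S r" by (intro W_hat_in_W'_r) (auto simp: W_r_def)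
  then show ?thesis by (auto simp: setcompr_eq_image)
qed

lemma Min_C_star_values_eq:
  assumes "1 \<le> r"
  shows "Min (C_star_values r) = Min (cut_pair_values r)"
proof (rule antisym)
  obtain W where W: "W \<in> W'_r E tlE hdE S r" "Min (C_star_values r) = card (Cs W)"
    using Min_in[OF finite_C_star_values C_star_values_nonempty[OF assms]] by auto
  then have in_pairs: "Min (C_star_values r) \<in> cut_pair_values r"
    using card_C_star_in_cut_pair_values by simp
  then show "Min (cut_pair_values r) \<le> Min (C_star_values r)" by (rule Min_le[OF finite_cut_pair_values])
  have "cut_pair_values r \<noteq> {}" using in_pairs by auto
  from Min_in[OF finite_cut_pair_values this]
  obtain W C where WC: "Min (cut_pair_values r) = card C - card W" "W \<in> W_r E r"
      "C \<in> Lambda_set E tlE hdE S \<rho>" "W \<subseteq> C" "D W \<subseteq> I C"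
    by auto
  obtain W' where W': "W' \<in> W'_r E tlE hdE S r" "card (Cs W') \<le> card C - card W"
    using cut_pair_value_ge_C_star[OF assms WC(2-5)] by auto
  then have "Min (C_star_values r) \<le> card (Cs W')" by (intro Min_le[OF finite_C_star_values]) auto
  with W'(2) WC(1) show "Min (C_star_values r) \<le> Min (cut_pair_values r)" by linarith
qed

end

section \<open>Zero mutual information on a finite uniform space\<close>

lemma emeasure_pmf_of_set_pos:
  assumes "finite \<Omega>" "\<omega> \<in> \<Omega>" "\<omega> \<in> A"
  shows "0 < emeasure (measure_pmf (pmf_of_set \<Omega>)) A"
proof -
  have "\<omega> \<in> set_pmf (pmf_of_set \<Omega>)" using assms by (subst set_pmf_of_set) auto
  then have "0 < measure_pmf.prob (pmf_of_set \<Omega>) A" using assms(3) by (rule measure_pmf_posI)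
  then show ?thesis by (simp add: measure_pmf.emeasure_eq_measure)
qed

lemma emeasure_pmf_of_set_eq_0:
  assumes "finite \<Omega>" "\<Omega> \<noteq> {}" "A \<inter> \<Omega> = {}"
  shows "emeasure (measure_pmf (pmf_of_set \<Omega>)) A = 0"
proof -
  have "measure_pmf.prob (pmf_of_set \<Omega>) A = 0"
    unfolding measure_pmf_zero_iff using assms by auto
  then show ?thesis by (simp add: measure_pmf.emeasure_eq_measure)
qed

lemma emeasure_marginal_product_pos:
  fixes \<Omega> :: "'a set" and X :: "'a \<Rightarrow> 'b" and Y :: "'a \<Rightarrow> 'c"
  defines "M \<equiv> measure_pmf (pmf_of_set \<Omega>)"
  assumes "finite \<Omega>" "\<omega> \<in> \<Omega>" "\<omega>' \<in> \<Omega>"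
  shows "0 < emeasure (distr M (count_space UNIV) X \<Otimes>\<^sub>M distr M (count_space UNIV) Y) {(X \<omega>, Y \<omega>')}"
proof -
  interpret Y: prob_space "distr M (count_space UNIV) Y"
    unfolding M_def by (rule prob_space.prob_space_distr) (auto intro: prob_space_measure_pmf)
  have "emeasure (distr M (count_space UNIV) X \<Otimes>\<^sub>M distr M (count_space UNIV) Y) ({X \<omega>} \<times> {Y \<omega>'})
      = emeasure M (X -` {X \<omega>} \<inter> space M) * emeasure M (Y -` {Y \<omega>'} \<inter> space M)"
    by (subst Y.emeasure_pair_measure_Times) (auto simp: emeasure_distr M_def)
  moreover have "0 < emeasure M (X -` {X \<omega>} \<inter> space M)" "0 < emeasure M (Y -` {Y \<omega>'} \<inter> space M)"
    unfolding M_def using assms(2-4) by (auto intro: emeasure_pmf_of_set_pos)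
  ultimately show ?thesis by (simp add: ennreal_zero_less_mult_iff)
qed

text \<open>Every pair of values of the marginals has positive product mass, so no product-null set carries
  joint mass.\<close>

lemma absolutely_continuous_joint_law:
  fixes \<Omega> :: "'a set" and X :: "'a \<Rightarrow> 'b" and Y :: "'a \<Rightarrow> 'c"
  defines "M \<equiv> measure_pmf (pmf_of_set \<Omega>)"
  assumes fin: "finite \<Omega>" and ne: "\<Omega> \<noteq> {}"
  shows "absolutely_continuous (distr M (count_space UNIV) X \<Otimes>\<^sub>M distr M (count_space UNIV) Y)
           (distr M (count_space UNIV \<Otimes>\<^sub>M count_space UNIV) (\<lambda>\<omega>. (X \<omega>, Y \<omega>)))"
    (is "absolutely_continuous ?P ?Q")
  unfolding absolutely_continuous_def
proof
  have g: "(\<lambda>\<omega>. (X \<omega>, Y \<omega>)) \<in> measurable M (count_space UNIV \<Otimes>\<^sub>M count_space UNIV)"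
    unfolding M_def by (auto simp: space_pair_measure)
  have sets_P: "sets ?P = sets (count_space UNIV \<Otimes>\<^sub>M count_space UNIV)"
    by (rule sets_pair_measure_cong) simp_all
  fix A assume A: "A \<in> null_sets ?P"
  have "emeasure ?Q A = 0"
  proof (rule ccontr)
    assume "emeasure ?Q A \<noteq> 0"
    then have "emeasure M ((\<lambda>\<omega>. (X \<omega>, Y \<omega>)) -` A \<inter> space M) \<noteq> 0"
      using A sets_P by (subst (asm) emeasure_distr[OF g]) auto
    then have "((\<lambda>\<omega>. (X \<omega>, Y \<omega>)) -` A \<inter> space M) \<inter> \<Omega> \<noteq> {}"
      using emeasure_pmf_of_set_eq_0[OF fin ne] unfolding M_def by metis
    then obtain \<omega> where \<omega>: "\<omega> \<in> \<Omega>" "(X \<omega>, Y \<omega>) \<in> A" by blast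
    have "emeasure ?P {(X \<omega>, Y \<omega>)} \<le> emeasure ?P A"
      using \<omega> A by (intro emeasure_mono) auto
    moreover have "0 < emeasure ?P {(X \<omega>, Y \<omega>)}"
      unfolding M_def using emeasure_marginal_product_pos[OF fin \<omega>(1) \<omega>(1)] .
    ultimately show False using null_setsD1[OF A] by simp
  qed
  then show "A \<in> null_sets ?Q"
    using null_setsD2[OF A] sets_P by (simp add: null_sets_def)
qed

lemma mutual_information_zero_imp_distr_eq:
  fixes \<Omega> :: "'a set" and X :: "'a \<Rightarrow> 'b" and Y :: "'a \<Rightarrow> 'c"
  defines "M \<equiv> measure_pmf (pmf_of_set \<Omega>)"
  assumes fin: "finite \<Omega>" and ne: "\<Omega> \<noteq> {}"
    and MI: "prob_space.mutual_information M 2 (count_space UNIV) (count_space UNIV) X Y = 0"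
  shows "distr M (count_space UNIV) X \<Otimes>\<^sub>M distr M (count_space UNIV) Y
       = distr M (count_space UNIV \<Otimes>\<^sub>M count_space UNIV) (\<lambda>\<omega>. (X \<omega>, Y \<omega>))"
proof -
  define P where "P = distr M (count_space UNIV) X \<Otimes>\<^sub>M distr M (count_space UNIV) Y"
  define Q where "Q = distr M (count_space UNIV \<Otimes>\<^sub>M count_space UNIV) (\<lambda>\<omega>. (X \<omega>, Y \<omega>))"
  interpret information_space M 2
    unfolding M_def by (intro information_space.intro prob_space_measure_pmf) (simp add: information_space_axioms_def)
  have measurable: "random_variable (count_space UNIV) X" "random_variable (count_space UNIV) Y"
    "(\<lambda>\<omega>. (X \<omega>, Y \<omega>)) \<in> measurable M (count_space UNIV \<Otimes>\<^sub>M count_space UNIV)"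
    unfolding M_def by (auto simp: space_pair_measure)
  have sets_P: "sets P = sets (count_space UNIV \<Otimes>\<^sub>M count_space UNIV)"
    unfolding P_def by (rule sets_pair_measure_cong) simp_all
  have ac: "absolutely_continuous P Q"
    unfolding P_def Q_def M_def using fin ne by (rule absolutely_continuous_joint_law)
  have int: "integrable Q (entropy_density 2 P Q)"
  proof -
    have "entropy_density 2 P Q \<in> borel_measurable (count_space UNIV \<Otimes>\<^sub>M count_space UNIV)"
      using measurable_entropy_density[of 2 P Q] measurable_cong_sets[OF sets_P refl] by blast
    moreover have "integrable M (\<lambda>\<omega>. entropy_density 2 P Q (X \<omega>, Y \<omega>))"
      unfolding M_def using fin ne by (intro integrable_measure_pmf_finite) simp
    ultimately show ?thesis unfolding Q_def using integrable_distr_eq[OF measurable(3)] by blast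
  qed
  interpret X: prob_space "distr M (count_space UNIV) X" by (rule prob_space_distr[OF measurable(1)])
  interpret Y: prob_space "distr M (count_space UNIV) Y" by (rule prob_space_distr[OF measurable(2)])
  interpret XY: pair_prob_space "distr M (count_space UNIV) X" "distr M (count_space UNIV) Y" ..
  interpret P: information_space P 2
    unfolding P_def by (intro information_space.intro XY.P.prob_space_axioms) (simp add: information_space_axioms_def)
  have "Q = P"
  proof (rule P.KL_eq_0_iff_eq_ac[THEN iffD1])
    show "prob_space Q" unfolding Q_def by (rule prob_space_distr[OF measurable(3)])
    show "sets Q = sets P" using sets_P unfolding Q_def by simp
    show "KL_divergence 2 P Q = 0" using MI unfolding mutual_information_def P_def Q_def .
  qed fact+
  then show ?thesis unfolding P_def Q_def ..
qed

lemma mutual_information_zero_support: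
  assumes fin: "finite \<Omega>"
    and MI: "prob_space.mutual_information (measure_pmf (pmf_of_set \<Omega>)) 2
               (count_space UNIV) (count_space UNIV) X Y = 0"
    and \<omega>: "\<omega>1 \<in> \<Omega>" "\<omega>2 \<in> \<Omega>"
  shows "\<exists>\<omega>\<in>\<Omega>. X \<omega> = X \<omega>1 \<and> Y \<omega> = Y \<omega>2"
proof -
  let ?M = "measure_pmf (pmf_of_set \<Omega>)"
  have ne: "\<Omega> \<noteq> {}" using \<omega> by blast
  have "0 < emeasure (distr ?M (count_space UNIV \<Otimes>\<^sub>M count_space UNIV) (\<lambda>\<omega>. (X \<omega>, Y \<omega>)))
              {(X \<omega>1, Y \<omega>2)}"
    using emeasure_marginal_product_pos[OF fin \<omega>, where X=X and Y=Y]
      mutual_information_zero_imp_distr_eq[OF fin ne MI]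
    by simp
  moreover have "{(X \<omega>1, Y \<omega>2)} \<in> sets (count_space UNIV \<Otimes>\<^sub>M count_space UNIV)"
    using pair_measureI[of "{X \<omega>1}" _ "{Y \<omega>2}"] by simp
  ultimately have "emeasure ?M ((\<lambda>\<omega>. (X \<omega>, Y \<omega>)) -` {(X \<omega>1, Y \<omega>2)} \<inter> space ?M) \<noteq> 0"
    by (subst (asm) emeasure_distr) (auto simp: space_pair_measure)
  then have "((\<lambda>\<omega>. (X \<omega>, Y \<omega>)) -` {(X \<omega>1, Y \<omega>2)} \<inter> space ?M) \<inter> \<Omega> \<noteq> {}"
    using emeasure_pmf_of_set_eq_0[OF fin ne] by metis
  then show ?thesis by auto
qed

section \<open>Secure codes for the sum\<close>

lemma one_less_card_field: "1 < CARD('f::{finite,field})"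
proof -
  have "card {0, 1::'f} \<le> CARD('f)" by (rule card_mono) simp_all
  then show ?thesis by simp
qed

lemma vec_sum_update_nth:
  assumes "finite S" "\<sigma> \<in> S" "j < l"
  shows "vec_sum l S (m(\<sigma> := t)) ! j = t ! j + (\<Sum>\<sigma>'\<in>S - {\<sigma>}. m \<sigma>' ! j)"
proof -
  have "vec_sum l S (m(\<sigma> := t)) ! j = (\<Sum>\<sigma>'\<in>S. (m(\<sigma> := t)) \<sigma>' ! j)"
    unfolding vec_sum_def using assms(3) by simp
  also have "\<dots> = t ! j + (\<Sum>\<sigma>'\<in>S - {\<sigma>}. m \<sigma>' ! j)"
    using assms(1,2) by (simp add: sum.remove)
  finally show ?thesis .
qed

locale sum_code = network_model V E tlE hdE S \<rho>
  for V :: "'v set" and E :: "'e set" and tlE hdE :: "'e \<Rightarrow> 'v" and S :: "'v set" and \<rho> :: 'v +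
  fixes K :: "'v \<Rightarrow> nat set" and l n :: nat
    and enc :: "'e \<Rightarrow> 'f::{finite,field} list \<Rightarrow> nat \<Rightarrow> 'f list"
    and phi :: "'e \<Rightarrow> ('e \<Rightarrow> 'f list) \<Rightarrow> 'f list" and psi :: "('e \<Rightarrow> 'f list) \<Rightarrow> 'f list"
    and y :: "'e \<Rightarrow> ('v \<Rightarrow> 'f list) \<times> ('v \<Rightarrow> nat) \<Rightarrow> 'f list"
  assumes keys: "\<sigma> \<in> S \<Longrightarrow> finite (K \<sigma>) \<and> K \<sigma> \<noteq> {}"
    and y_source: "\<omega> \<in> sample_space S K l \<Longrightarrow> e \<in> E \<Longrightarrow> tlE e \<in> S \<Longrightarrow>
      y e \<omega> = enc e (fst \<omega> (tlE e)) (snd \<omega> (tlE e))"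
    and y_inner: "\<omega> \<in> sample_space S K l \<Longrightarrow> e \<in> E \<Longrightarrow> tlE e \<notin> S \<Longrightarrow>
      y e \<omega> = phi e (\<lambda>d. if d \<in> in_edges E hdE (tlE e) then y d \<omega> else [])"
    and length_y: "\<omega> \<in> sample_space S K l \<Longrightarrow> e \<in> E \<Longrightarrow> length (y e \<omega>) = n"
    and decodes_sum: "\<omega> \<in> sample_space S K l \<Longrightarrow>
      psi (\<lambda>d. if d \<in> in_edges E hdE \<rho> then y d \<omega> else []) = vec_sum l S (fst \<omega>)"
begin

abbreviation \<Omega> :: "(('v \<Rightarrow> 'f list) \<times> ('v \<Rightarrow> nat)) set" where "\<Omega> \<equiv> sample_space S K l"

abbreviation "wiretap_secure W \<equiv>
  prob_space.mutual_information (measure_pmf (pmf_of_set \<Omega>)) 2 (count_space UNIV) (count_space UNIV)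
    (\<lambda>\<omega>. \<lambda>e. if e \<in> W then y e \<omega> else []) fst = 0"

lemma outcome_with_messages:
  assumes "\<forall>\<sigma>\<in>S. length (m \<sigma>) = l" "\<forall>v. v \<notin> S \<longrightarrow> m v = []"
  shows "(m, \<lambda>v. if v \<in> S then SOME k. k \<in> K v else 0) \<in> \<Omega>"
  using assms keys by (auto simp: sample_space_def some_in_eq)

lemma finite_outcomes: "finite \<Omega>"
proof -
  let ?M = "{m. \<forall>v. (v \<in> S \<longrightarrow> m v \<in> {xs :: 'f list. length xs = l}) \<and> (v \<notin> S \<longrightarrow> m v = [])}"
  let ?K = "{k. \<forall>v. (v \<in> S \<longrightarrow> k v \<in> (\<Union>\<sigma>\<in>S. K \<sigma>)) \<and> (v \<notin> S \<longrightarrow> k v = 0)}"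
  have sub: "\<Omega> \<subseteq> ?M \<times> ?K" unfolding sample_space_def by auto
  have "finite {xs :: 'f list. length xs = l}"
    using finite_lists_length_eq[of "UNIV :: 'f set" l] by simp
  then have "finite ?M" by (rule finite_set_of_finite_funs[OF finite_S])
  have "finite (\<Union>\<sigma>\<in>S. K \<sigma>)" using finite_S keys by blast
  then have "finite ?K" by (rule finite_set_of_finite_funs[OF finite_S])
  with \<open>finite ?M\<close> have "finite (?M \<times> ?K)" by simp
  with sub show ?thesis by (rule finite_subset)
qed

lemma wiretap_indistinguishable:
  assumes secure: "wiretap_secure W" and W: "W \<subseteq> E" and \<omega>0: "(m0, k0) \<in> \<Omega>"
    and m: "\<forall>\<sigma>\<in>S. length (m \<sigma>) = l" "\<forall>v. v \<notin> S \<longrightarrow> m v = []"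
  obtains k where "(m, k) \<in> \<Omega>" "\<forall>v\<in>S - D W. k v = k0 v" "\<forall>e\<in>W. y e (m, k) = y e (m0, k0)"
proof -
  obtain \<omega> where \<omega>: "\<omega> \<in> \<Omega>" "(\<lambda>e. if e \<in> W then y e \<omega> else []) = (\<lambda>e. if e \<in> W then y e (m0, k0) else [])"
      "fst \<omega> = m"
    using mutual_information_zero_support[OF finite_outcomes secure \<omega>0 outcome_with_messages[OF m]] by auto
  define k where "k v = (if v \<in> D W then snd \<omega> v else k0 v)" for v
  have "(m, snd \<omega>) \<in> \<Omega>" using \<omega>(1,3) by (metis prod.collapse)
  then have mk: "(m, k) \<in> \<Omega>"
    using \<omega>0 D_set_subset unfolding sample_space_def k_def by auto
  have "\<forall>v\<in>S - D W. k v = k0 v" unfolding k_def by auto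
  moreover have "y e (m, k) = y e (m0, k0)" if e: "e \<in> W" for e
  proof -
    have "y e (m, k) = y e (m, snd \<omega>)"
    proof (rule edge_function_determined[where \<Omega>=\<Omega> and y=y and z="[]" and T="S - D W" and Z="{}",
          OF y_source y_inner mk \<open>(m, snd \<omega>) \<in> \<Omega>\<close>])
      show "e \<in> E" using e W by blast
      show "sep {} {e} (S - D W)" by (rule sepI) (use e in \<open>auto simp: mem_D_set_iff\<close>)
    qed (auto simp: k_def)
    also have "\<dots> = y e (m0, k0)" using fun_cong[OF \<omega>(2), of e] \<omega>(3) e by (auto split: if_splits)
    finally show ?thesis .
  qed
  ultimately show ?thesis using mk that by blast
qed

lemma sum_determined_by_cut:
  assumes \<omega>: "\<omega> \<in> \<Omega>" "\<omega>' \<in> \<Omega>"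
    and outside: "\<And>\<sigma>. \<sigma> \<in> S - D W \<Longrightarrow> fst \<omega> \<sigma> = fst \<omega>' \<sigma> \<and> snd \<omega> \<sigma> = snd \<omega>' \<sigma>"
    and on_cut: "\<And>d. d \<in> W \<union> Kc \<Longrightarrow> y d \<omega> = y d \<omega>'"
    and Kc: "sep_nodes (E - W) tlE hdE Kc {\<rho>} (D W)"
  shows "vec_sum l S (fst \<omega>) = vec_sum l S (fst \<omega>')"
proof -
  have "y d \<omega> = y d \<omega>'" if d: "d \<in> in_edges E hdE \<rho>" for d
  proof (rule edge_function_determined[where \<Omega>=\<Omega> and y=y and z="[]", OF y_source y_inner \<omega> outside on_cut])
    show "d \<in> E" using d unfolding in_edges_def by blast
    show "sep (W \<union> Kc) {d} (D W)"
      by (rule sep_subset[OF sep_in_edges_of_sep_nodes_residual[OF Kc]]) (use d in simp)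
  qed
  then have "(\<lambda>d. if d \<in> in_edges E hdE \<rho> then y d \<omega> else [])
      = (\<lambda>d. if d \<in> in_edges E hdE \<rho> then y d \<omega>' else [])" by (intro ext) simp
  then show ?thesis using decodes_sum[OF \<omega>(1)] decodes_sum[OF \<omega>(2)] by simp
qed

lemma source_message_determined_by_cut:
  assumes Kc: "sep_nodes (E - W) tlE hdE Kc {\<rho>} (D W)" and \<sigma>: "\<sigma> \<in> D W"
    and \<omega>: "(m(\<sigma> := t), k) \<in> \<Omega>" "(m(\<sigma> := s), k') \<in> \<Omega>"
    and lengths: "length t = l" "length s = l"
    and outside: "\<forall>v\<in>S - D W. k v = k' v"
    and on_cut: "\<forall>d\<in>W \<union> Kc. y d (m(\<sigma> := t), k) = y d (m(\<sigma> := s), k')"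
  shows "t = s"
proof -
  have "\<sigma> \<in> S" using \<sigma> D_set_subset by blast
  have "vec_sum l S (fst (m(\<sigma> := t), k)) = vec_sum l S (fst (m(\<sigma> := s), k'))"
  proof (rule sum_determined_by_cut[OF \<omega> _ _ Kc])
    show "fst (m(\<sigma> := t), k) v = fst (m(\<sigma> := s), k') v \<and> snd (m(\<sigma> := t), k) v = snd (m(\<sigma> := s), k') v"
      if "v \<in> S - D W" for v
      using that \<sigma> outside by auto
    show "y d (m(\<sigma> := t), k) = y d (m(\<sigma> := s), k')" if "d \<in> W \<union> Kc" for d
      using that on_cut by blast
  qed
  then have sums: "vec_sum l S (m(\<sigma> := t)) ! j = vec_sum l S (m(\<sigma> := s)) ! j" for j by simp
  have "t ! j = s ! j" if "j < l" for j
    using sums[of j] vec_sum_update_nth[OF finite_S \<open>\<sigma> \<in> S\<close> that, of m t]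
      vec_sum_update_nth[OF finite_S \<open>\<sigma> \<in> S\<close> that, of m s] by simp
  with lengths show "t = s" by (simp add: nth_equalityI)
qed

lemma message_length_le_cut:
  assumes secure: "wiretap_secure W" and W: "W \<subseteq> E" "W \<noteq> {}"
    and Kc: "Kc \<subseteq> E - W" "sep_nodes (E - W) tlE hdE Kc {\<rho>} (D W)"
  shows "l \<le> n * card Kc"
proof -
  obtain \<sigma> where \<sigma>: "\<sigma> \<in> D W" using D_set_nonempty[OF W] by blast
  then have "\<sigma> \<in> S" using D_set_subset by blast
  define m0 where "m0 v = (if v \<in> S then replicate l (0::'f) else [])" for v
  define k0 where "k0 v = (if v \<in> S then SOME k. k \<in> K v else 0)" for v
  have \<omega>0: "(m0, k0) \<in> \<Omega>" unfolding m0_def k0_def by (rule outcome_with_messages) auto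
  define L where "L = {t :: 'f list. length t = l}"
  have "\<forall>t\<in>L. \<exists>k. (m0(\<sigma> := t), k) \<in> \<Omega> \<and> (\<forall>v\<in>S - D W. k v = k0 v) \<and>
      (\<forall>e\<in>W. y e (m0(\<sigma> := t), k) = y e (m0, k0))"
  proof
    fix t assume "t \<in> L"
    then have "\<forall>\<sigma>'\<in>S. length ((m0(\<sigma> := t)) \<sigma>') = l" "\<forall>v. v \<notin> S \<longrightarrow> (m0(\<sigma> := t)) v = []"
      using \<open>\<sigma> \<in> S\<close> unfolding L_def m0_def by auto
    then obtain k where "(m0(\<sigma> := t), k) \<in> \<Omega>" "\<forall>v\<in>S - D W. k v = k0 v"
        "\<forall>e\<in>W. y e (m0(\<sigma> := t), k) = y e (m0, k0)"
      by (rule wiretap_indistinguishable[OF secure W(1) \<omega>0])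
    then show "\<exists>k. (m0(\<sigma> := t), k) \<in> \<Omega> \<and> (\<forall>v\<in>S - D W. k v = k0 v) \<and>
        (\<forall>e\<in>W. y e (m0(\<sigma> := t), k) = y e (m0, k0))" by blast
  qed
  from bchoice[OF this] obtain kt where kt: "\<forall>t\<in>L. (m0(\<sigma> := t), kt t) \<in> \<Omega> \<and>
      (\<forall>v\<in>S - D W. kt t v = k0 v) \<and> (\<forall>e\<in>W. y e (m0(\<sigma> := t), kt t) = y e (m0, k0))" ..
  define cut_view where "cut_view t = restrict (\<lambda>d. y d (m0(\<sigma> := t), kt t)) Kc" for t
  have inj: "inj_on cut_view L"
  proof (rule inj_onI)
    fix t s assume t: "t \<in> L" and s: "s \<in> L" and eq: "cut_view t = cut_view s"
    show "t = s"
    proof (rule source_message_determined_by_cut[OF Kc(2) \<sigma>])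
      show "(m0(\<sigma> := t), kt t) \<in> \<Omega>" "(m0(\<sigma> := s), kt s) \<in> \<Omega>" using kt t s by blast+
      show "length t = l" "length s = l" using t s unfolding L_def by simp_all
      show "\<forall>v\<in>S - D W. kt t v = kt s v" using kt t s by simp
      have "y d (m0(\<sigma> := t), kt t) = y d (m0(\<sigma> := s), kt s)" if "d \<in> W \<union> Kc" for d
      proof (cases "d \<in> W")
        case True
        then show ?thesis using kt t s by simp
      next
        case False
        with that have "d \<in> Kc" by blast
        then show ?thesis using fun_cong[OF eq, of d] unfolding cut_view_def by simp
      qed
      then show "\<forall>d\<in>W \<union> Kc. y d (m0(\<sigma> := t), kt t) = y d (m0(\<sigma> := s), kt s)" by blast
    qed
  qed
  have card_lists: "card {xs :: 'f list. length xs = k} = CARD('f) ^ k" for k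
    using card_lists_length_eq[of "UNIV :: 'f set" k] by simp
  have finite_lists: "finite {xs :: 'f list. length xs = n}"
    using finite_lists_length_eq[of "UNIV :: 'f set" n] by simp
  have finite_Kc: "finite Kc" using Kc(1) finite_E by (meson finite_Diff finite_subset)
  have "cut_view ` L \<subseteq> Kc \<rightarrow>\<^sub>E {xs. length xs = n}"
  proof
    fix x assume "x \<in> cut_view ` L"
    then obtain t where "t \<in> L" "x = cut_view t" by blast
    with kt Kc(1) length_y show "x \<in> Kc \<rightarrow>\<^sub>E {xs. length xs = n}" unfolding cut_view_def by auto
  qed
  from card_inj_on_le[OF inj this finite_PiE[OF finite_Kc finite_lists]]
  have "CARD('f) ^ l \<le> card (Kc \<rightarrow>\<^sub>E {xs :: 'f list. length xs = n})" unfolding L_def card_lists .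
  also have "\<dots> = CARD('f) ^ (n * card Kc)"
    by (simp add: card_PiE[OF finite_Kc] card_lists power_mult)
  finally show ?thesis by (rule power_le_imp_le_exp[OF one_less_card_field])
qed

end

lemma achievable_rate_le:
  assumes bound: "\<And>l n. admissible_code E tlE hdE S \<rho> r F l n \<Longrightarrow> real l / real n \<le> B"
    and R: "achievable_rate E tlE hdE S \<rho> r F R"
  shows "R \<le> B"
proof (rule field_le_epsilon)
  fix \<epsilon> :: real assume "0 < \<epsilon>"
  with R obtain l n where "admissible_code E tlE hdE S \<rho> r F l n" "R - \<epsilon> < real l / real n"
    unfolding achievable_rate_def by blast
  with bound show "R \<le> B + \<epsilon>" by fastforce
qed

context network_model
begin

lemma admissible_code_rate_le_cut:
  assumes code: "admissible_code E tlE hdE S \<rho> r (F :: 'f::{finite,field} itself) l n"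
    and W: "W \<in> W_r E r" "W \<noteq> {}"
    and Kc: "Kc \<subseteq> E - W" "sep_nodes (E - W) tlE hdE Kc {\<rho>} (D W)"
  shows "real l / real n \<le> card Kc"
proof -
  obtain K :: "'v \<Rightarrow> nat set" and enc :: "'e \<Rightarrow> 'f list \<Rightarrow> nat \<Rightarrow> 'f list"
    and phi :: "'e \<Rightarrow> ('e \<Rightarrow> 'f list) \<Rightarrow> 'f list" and psi :: "('e \<Rightarrow> 'f list) \<Rightarrow> 'f list"
    and y :: "'e \<Rightarrow> ('v \<Rightarrow> 'f list) \<times> ('v \<Rightarrow> nat) \<Rightarrow> 'f list"
    where "0 < n"
      and keys: "\<forall>\<sigma>\<in>S. finite (K \<sigma>) \<and> K \<sigma> \<noteq> {}"
      and code_eqs: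
      "\<forall>\<omega>\<in>sample_space S K l. \<forall>e\<in>E. tlE e \<in> S \<longrightarrow> y e \<omega> = enc e (fst \<omega> (tlE e)) (snd \<omega> (tlE e))"
      "\<forall>\<omega>\<in>sample_space S K l. \<forall>e\<in>E. tlE e \<notin> S \<longrightarrow>
         y e \<omega> = phi e (\<lambda>d. if d \<in> in_edges E hdE (tlE e) then y d \<omega> else [])"
      "\<forall>\<omega>\<in>sample_space S K l. \<forall>e\<in>E. length (y e \<omega>) = n"
      "\<forall>\<omega>\<in>sample_space S K l. psi (\<lambda>d. if d \<in> in_edges E hdE \<rho> then y d \<omega> else []) = vec_sum l S (fst \<omega>)"
      and secure: "\<forall>W\<in>W_r E r.
         prob_space.mutual_information (measure_pmf (pmf_of_set (sample_space S K l))) 2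
           (count_space UNIV) (count_space UNIV) (\<lambda>\<omega>. \<lambda>e. if e \<in> W then y e \<omega> else []) (\<lambda>\<omega>. fst \<omega>) = 0"
    using code unfolding admissible_code_def Let_def by blast
  interpret sum_code V E tlE hdE S \<rho> K l n enc phi psi y
    using keys code_eqs by unfold_locales auto
  have "l \<le> n * card Kc"
    using message_length_le_cut secure W Kc unfolding W_r_def by blast
  then have "real l \<le> real (card Kc) * real n" by (metis mult.commute of_nat_le_iff of_nat_mult)
  with \<open>0 < n\<close> show ?thesis by (simp add: pos_divide_le_eq)
qed

end

theorem theorem9:
  fixes V :: "'v set" and E :: "'e set" and tlE hdE :: "'e \<Rightarrow> 'v" and S :: "'v set"
    and \<rho> :: 'v and r :: nat and F :: "'f::{finite,field} itself"
  assumes "network V E tlE hdE S \<rho>" and "1 \<le> r"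
  shows "(\<forall>R. achievable_rate E tlE hdE S \<rho> r F R \<longrightarrow>
            R \<le> real (Min {card (C_star E tlE hdE S \<rho> W) | W. W \<in> W'_r E tlE hdE S r}))
       \<and> Min {card (C_star E tlE hdE S \<rho> W) | W. W \<in> W'_r E tlE hdE S r}
         = Min {card C - card W | W C. W \<in> W_r E r \<and> C \<in> Lambda_set E tlE hdE S \<rho> \<and> W \<subseteq> C
                 \<and> D_set E tlE hdE S W \<subseteq> I_set E tlE hdE S \<rho> C}"
proof -
  interpret network_model V E tlE hdE S \<rho> by (rule network_model.intro) (fact assms(1))
  obtain W where W: "W \<in> W'_r E tlE hdE S r" "Min (C_star_values r) = card (Cs W)"
    using Min_in[OF finite_C_star_values C_star_values_nonempty[OF assms(2)]] by auto
  then have "W \<in> W_r E r" "W \<noteq> {}" unfolding W'_r_def by auto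
  then have "real l / real n \<le> Min (C_star_values r)" if "admissible_code E tlE hdE S \<rho> r F l n" for l n
    using admissible_code_rate_le_cut[OF that _ _ C_star_subset sep_nodes_C_star] W(2) by simp
  then have "\<forall>R. achievable_rate E tlE hdE S \<rho> r F R \<longrightarrow> R \<le> Min (C_star_values r)"
    by (blast intro: achievable_rate_le)
  with Min_C_star_values_eq[OF assms(2)] show ?thesis by simp
qed

end
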